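(* Let $T>0$ and $N\in\mathbb{N}$. Under the assumptions of the context, the killed interacting particle system $$\xi^i_t=\xi^i_0+\int_0^t b\big(u_N(\cdot,\xi^i_s)(s),\ \nabla u_N(\cdot,\xi^i_s)(s)\big)ds+\sqrt2\,W^i_t,\quad t\in[0,\tau^i)\cap[0,T];\qquad \xi^i_t=\Delta,\ t\ge\tau^i,$$ $i=1,\dots,N$, with $$\tau^i:=\inf\Big\{t\ge0:\int_0^t\lambda c_0\exp\big(-\lambda u_N(\cdot,\xi^i_s)(s)\big)ds\ge Z_i\Big\},$$ admits a pathwise unique strong solution $\xi_t=(\xi^1_t,\dots,\xi^N_t)$, $t\in[0,T]$.
   Context: On a filtered probability space, let $W^1,\dots,W^N$ be independent one-dimensional Brownian motions, $\xi^i_0=X^i_0$ i.i.d. $\mathcal F_0$-measurable real random variables with law $\rho_0(x)dx$, $\rho_0\in L^2(\mathbb{R})\cap C_b(\mathbb{R})$, finite second moment, independent of all $W^j$; and $Z_1,\dots,Z_N$ i.i.d. $\mathrm{Exp}(1)$ random variables independent of the Brownian motions and initial conditions. $\Delta$ is a cemetery state isolated from $\mathbb{R}$, with the convention $f(\Delta)=0$ for functions on $\mathbb{R}$, and $\xi^i_{\tau^i}:=\lim_{t\to\tau^{i-}}\xi^i_t$. The empirical measure of alive particles is $\mu^N_t:=\frac1N\sum_{i=1}^N\delta_{\xi^i_t}\mathbf 1_{\{t<\tau^i\}}$, $u_N(t,x):=\int_{\mathbb{R}}K(x-y)\mu^N_t(dy)$, and $u_N(\cdot,x)(t):=\int_0^t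 u_N(s,x)\,ds$, $\nabla u_N(\cdot,x)(t):=\int_0^t\int_{\mathbb{R}}\nabla K(x-y)\mu^N_s(dy)\,ds$. $K:\mathbb{R}\to\mathbb{R}_+$ is a smooth mollifier: $K\in C^\infty$; $|K|\le M_K$, $|\nabla K|\le M_K'$, $|\nabla^2K|\le M_K''$; $K$ and $\nabla K$ are Lipschitz with constants $L_K,L_K'$; $\int K=1$. Parameters $\lambda>0$, $c_0>0$, $\varphi_0>0$, $\varphi_1\in\mathbb{R}$ are such that there exist constants $0<m\le M$ with $m\le\varphi_0+\varphi_1c_0e^{-\lambda x}\le M$ for all $x\in[0,M_KT]$. The drift is $b(x,y):=-\varphi_1\lambda c_0\dfrac{e^{-\lambda x}y}{\varphi_0+\varphi_1c_0e^{-\lambda x}}$. *)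

theory Defs
  imports "HOL-Probability.Probability"
begin

text \<open>Particle states live in \<open>real option\<close>: \<open>Some x\<close> is the position \<open>x \<in> \<real>\<close>,
  \<open>None\<close> is the cemetery state Delta.  Particles are indexed by \<open>0..N-1\<close>.\<close>

definition ext0 :: "(real \<Rightarrow> real) \<Rightarrow> real option \<Rightarrow> real" where
  "ext0 f p = (case p of None \<Rightarrow> 0 | Some x \<Rightarrow> f x)"

definition uN :: "nat \<Rightarrow> (real \<Rightarrow> real) \<Rightarrow> (nat \<Rightarrow> real \<Rightarrow> real option) \<Rightarrow> real \<Rightarrow> real \<Rightarrow> real" where
  "uN N K \<xi> t x = (1 / real N) * (\<Sum>j<N. ext0 (\<lambda>y. K (x - y)) (\<xi> j t))"

text \<open>\<open>u_N(\<cdot>,x)(t) = \<integral>_0^t u_N(s,x) ds\<close>.\<close>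
definition intuN :: "nat \<Rightarrow> (real \<Rightarrow> real) \<Rightarrow> (nat \<Rightarrow> real \<Rightarrow> real option) \<Rightarrow> real \<Rightarrow> real \<Rightarrow> real" where
  "intuN N K \<xi> t x = set_lebesgue_integral lborel {0..t} (\<lambda>s. uN N K \<xi> s x)"

text \<open>\<open>\<nabla>u_N(\<cdot>,x)(t) = \<integral>_0^t \<integral> \<nabla>K(x-y) \<mu>^N_s(dy) ds\<close>.\<close>
definition gradUN :: "nat \<Rightarrow> (real \<Rightarrow> real) \<Rightarrow> (nat \<Rightarrow> real \<Rightarrow> real option) \<Rightarrow> real \<Rightarrow> real \<Rightarrow> real" where
  "gradUN N dK \<xi> t x = set_lebesgue_integral lborel {0..t} (\<lambda>s. uN N dK \<xi> s x)"

definition drift_b :: "real \<Rightarrow> real \<Rightarrow> real \<Rightarrow> real \<Rightarrow> real \<Rightarrow> real \<Rightarrow> real" where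
  "drift_b lam c0 phi0 phi1 x y =
     - phi1 * lam * c0 * (exp (- lam * x) * y) / (phi0 + phi1 * c0 * exp (- lam * x))"

text \<open>Killing time \<open>\<tau>^i\<close> (extended real; \<open>Inf {} = \<infinity>\<close>).  Only times in \<open>[0,T]\<close> are
  considered, since the system is posed on \<open>[0,T]\<close>; \<open>\<tau>^i\<close> agrees with the paper's
  stopping time whenever the latter is \<open>\<le> T\<close>, and is \<open>\<infinity>\<close> otherwise.\<close>
definition kill_time :: "real \<Rightarrow> nat \<Rightarrow> (real \<Rightarrow> real) \<Rightarrow> real \<Rightarrow> real \<Rightarrow> real
    \<Rightarrow> (nat \<Rightarrow> real \<Rightarrow> real option) \<Rightarrow> nat \<Rightarrow> ereal" where
  "kill_time T N K lam c0 Zi \<xi> i =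
     Inf {ereal t | t. 0 \<le> t \<and> t \<le> T \<and>
        Zi \<le> set_lebesgue_integral lborel {0..t} (\<lambda>s. lam * c0 * exp (- lam * ext0 (intuN N K \<xi> s) (\<xi> i s)))}"

definition is_killed_solution ::
  "real \<Rightarrow> nat \<Rightarrow> (real \<Rightarrow> real) \<Rightarrow> (real \<Rightarrow> real) \<Rightarrow> real \<Rightarrow> real \<Rightarrow> real \<Rightarrow> real
   \<Rightarrow> (nat \<Rightarrow> real) \<Rightarrow> (nat \<Rightarrow> real \<Rightarrow> real) \<Rightarrow> (nat \<Rightarrow> real)
   \<Rightarrow> (nat \<Rightarrow> real \<Rightarrow> real option) \<Rightarrow> bool" where
  "is_killed_solution T N K dK lam c0 phi0 phi1 x0 W Z \<xi> \<longleftrightarrow>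
     (\<forall>i<N.
        continuous_on {t. 0 \<le> t \<and> t \<le> T \<and> ereal t < kill_time T N K lam c0 (Z i) \<xi> i}
          (\<lambda>t. the (\<xi> i t)) \<and>
        (\<forall>t. 0 \<le> t \<and> t \<le> T \<longrightarrow>
           (ereal t < kill_time T N K lam c0 (Z i) \<xi> i \<longrightarrow>
              \<xi> i t = Some (x0 i
                 + set_lebesgue_integral lborel {0..t} (\<lambda>s.
                      drift_b lam c0 phi0 phi1 (intuN N K \<xi> s (the (\<xi> i s)))
                                               (gradUN N dK \<xi> s (the (\<xi> i s))))
                 + sqrt 2 * W i t)) \<and>
           (kill_time T N K lam c0 (Z i) \<xi> i \<le> ereal t \<longrightarrow> \<xi> i t = None)))"

text \<open>Measurability of a \<open>\<real> \<union> {\<Delta>}\<close>-valued random variable, \<open>\<Delta>\<close> isolated.\<close>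
definition meas_opt :: "'a measure \<Rightarrow> ('a \<Rightarrow> real option) \<Rightarrow> bool" where
  "meas_opt G X \<longleftrightarrow> {\<omega> \<in> space G. X \<omega> = None} \<in> sets G \<and>
     (\<forall>B \<in> sets borel. {\<omega> \<in> space G. X \<omega> \<in> Some ` B} \<in> sets G)"

definition brownian_motion :: "'a measure \<Rightarrow> (real \<Rightarrow> 'a measure) \<Rightarrow> (real \<Rightarrow> 'a \<Rightarrow> real) \<Rightarrow> bool" where
  "brownian_motion M F W \<longleftrightarrow>
     (\<forall>\<omega>\<in>space M. W 0 \<omega> = 0 \<and> continuous_on {0..} (\<lambda>t. W t \<omega>)) \<and>
     (\<forall>t\<ge>0. W t \<in> borel_measurable (F t)) \<and>
     (\<forall>s t. 0 \<le> s \<and> s < t \<longrightarrow>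
        distributed M lborel (\<lambda>\<omega>. W t \<omega> - W s \<omega>) (normal_density 0 (sqrt (t - s))) \<and>
        prob_space.indep_set M (sets (F s))
          {(\<lambda>\<omega>. W t \<omega> - W s \<omega>) -` A \<inter> space M | A. A \<in> sets borel})"

definition gen_sigma :: "'a measure \<Rightarrow> ('a \<Rightarrow> real) set \<Rightarrow> 'a set set" where
  "gen_sigma M Xs = sigma_sets (space M) {X -` A \<inter> space M | X A. X \<in> Xs \<and> A \<in> sets borel}"

end

theory Submission
  imports Defs
begin

text \<open>Fix the kill times \<open>\<sigma>\<close> of the particles. The alive particles then solve an integral
  equation whose drift is bounded and Lipschitz along paths, because the time-integrated kernel
  stays in \<open>[0, M\<^sub>K T]\<close>, where the denominator of \<open>b\<close> is at least \<open>m\<close>. Picard iteration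
  converges uniformly, and the factorial estimate \<open>(\<Lambda> t)\<^sup>n / n!\<close> for the difference of two
  solutions gives their uniqueness.

  The kill times are then fixed one at a time: given the kill times determined so far, run the
  diffusion, compute the clock of every surviving particle and kill the first one whose clock
  reaches its exponential threshold. Since a clock up to time \<open>t\<close> only depends on the
  configuration before \<open>t\<close>, the kill times fixed earlier stay consistent, and after at most \<open>N\<close>
  rounds the kill pattern reproduces itself. The same causality shows that two solutions cannot
  have a first time at which their kill patterns differ, which gives pathwise uniqueness.

  Every step of the construction is a limit, an integral or an infimum of measurable functionals
  of \<open>(X\<^sub>0, Z, W)\<close>, and by uniqueness the state at time \<open>t\<close> only depends on \<open>W\<close> on \<open>[0, t]\<close>;
  this gives the adaptedness of the solution.\<close>

section \<open>Integrals and elementary estimates\<close>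

lemma abs_set_integral_Icc_le:
  fixes f :: "real \<Rightarrow> real"
  assumes bound: "\<And>r. r \<in> {a..b} \<Longrightarrow> \<bar>f r\<bar> \<le> B" and "a \<le> b"
  shows "\<bar>set_lebesgue_integral lborel {a..b} f\<bar> \<le> B * (b - a)"
proof (cases "set_integrable lborel {a..b} f")
  case True
  have "\<bar>set_lebesgue_integral lborel {a..b} f\<bar> \<le> set_lebesgue_integral lborel {a..b} (\<lambda>r. \<bar>f r\<bar>)"
    using set_integral_norm_bound[OF True] by simp
  also have "\<dots> \<le> set_lebesgue_integral lborel {a..b} (\<lambda>r. B)"
    using bound by (intro set_integral_mono set_integrable_abs True borel_integrable_atLeastAtMost') auto
  finally show ?thesis
    using \<open>a \<le> b\<close> by (simp add: set_integral_const mult.commute)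
next
  case False
  then have "set_lebesgue_integral lborel {a..b} f = 0"
    by (simp add: set_lebesgue_integral_def set_integrable_def not_integrable_integral_eq)
  moreover have "0 \<le> B"
    using bound[of a] \<open>a \<le> b\<close> by auto
  ultimately show ?thesis
    using \<open>a \<le> b\<close> by simp
qed

lemma set_integral_Icc_nonneg:
  fixes f :: "real \<Rightarrow> real"
  assumes "\<And>r. r \<in> {a..b} \<Longrightarrow> 0 \<le> f r"
  shows "0 \<le> set_lebesgue_integral lborel {a..b} f"
  unfolding set_lebesgue_integral_def
  by (rule integral_nonneg_AE) (auto simp: assms indicator_def)

lemma abs_set_integral_diff_le:
  fixes f g h :: "real \<Rightarrow> real"
  assumes f: "set_integrable lborel A f" and g: "set_integrable lborel A g"
    and h: "set_integrable lborel A h" and le: "\<And>s. s \<in> A \<Longrightarrow> \<bar>f s - g s\<bar> \<le> h s"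
  shows "\<bar>set_lebesgue_integral lborel A f - set_lebesgue_integral lborel A g\<bar>
    \<le> set_lebesgue_integral lborel A h"
proof -
  have fg: "set_integrable lborel A (\<lambda>s. f s - g s)"
    using f g by (rule set_integral_diff(1))
  have "\<bar>set_lebesgue_integral lborel A f - set_lebesgue_integral lborel A g\<bar>
      = \<bar>set_lebesgue_integral lborel A (\<lambda>s. f s - g s)\<bar>"
    using f g by (simp add: set_integral_diff(2))
  also have "\<dots> \<le> set_lebesgue_integral lborel A (\<lambda>s. \<bar>f s - g s\<bar>)"
    using set_integral_norm_bound[OF fg] by simp
  also have "\<dots> \<le> set_lebesgue_integral lborel A h"
    using h le fg by (intro set_integral_mono set_integrable_abs) auto
  finally show ?thesis .
qed

lemma set_integral_Icc_power:
  assumes "0 \<le> t"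
  shows "set_lebesgue_integral lborel {0..t} (\<lambda>s. c * s ^ n) = c * t ^ Suc n / Suc n"
proof -
  have "set_lebesgue_integral lborel {0..t} (\<lambda>s. c * s ^ n) = c * (\<integral>x. x ^ n * indicator {0..t} x \<partial>lborel)"
    unfolding set_lebesgue_integral_def
    by (simp add: mult.commute mult.left_commute mult.assoc flip: integral_mult_right_zero)
  then show ?thesis
    using integral_power[OF assms, of n] by simp
qed

definition bounded_borel_on :: "real set \<Rightarrow> (real \<Rightarrow> real) \<Rightarrow> bool" where
  "bounded_borel_on S f \<longleftrightarrow> set_borel_measurable borel S f \<and> bounded (f ` S)"

lemma bounded_borel_onI:
  assumes "set_borel_measurable borel S f" "\<And>r. r \<in> S \<Longrightarrow> \<bar>f r\<bar> \<le> B"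
  shows "bounded_borel_on S f"
  using assms unfolding bounded_borel_on_def bounded_iff by auto

lemma bounded_borel_onE:
  assumes "bounded_borel_on S f"
  obtains B where "set_borel_measurable borel S f" "\<And>r. r \<in> S \<Longrightarrow> \<bar>f r\<bar> \<le> B"
proof -
  obtain B where "\<forall>x\<in>f ` S. norm x \<le> B"
    using assms unfolding bounded_borel_on_def bounded_iff by blast
  then show ?thesis
    using assms that unfolding bounded_borel_on_def by auto
qed

lemma bounded_borel_on_set_integrable:
  assumes f: "bounded_borel_on S f" and sub: "{a..b} \<subseteq> S"
  shows "set_integrable lborel {a..b} f"
proof -
  obtain B where m: "set_borel_measurable borel S f" and B: "\<And>r. r \<in> S \<Longrightarrow> \<bar>f r\<bar> \<le> B"
    using bounded_borel_onE[OF f] by blast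
  have "integrable lborel (\<lambda>x. indicator {a..b} x *\<^sub>R (indicator S x *\<^sub>R f x))"
    using m B sub
    by (intro integrableI_bounded_set_indicator[where B = B])
       (auto simp: set_borel_measurable_def indicator_def emeasure_lborel_Icc_eq subset_iff intro!: AE_I2)
  moreover have "(\<lambda>x. indicator {a..b} x *\<^sub>R (indicator S x *\<^sub>R f x)) = (\<lambda>x. indicator {a..b} x *\<^sub>R f x)"
    using sub by (auto simp: indicator_def fun_eq_iff)
  ultimately show ?thesis
    unfolding set_integrable_def by simp
qed

lemma bounded_borel_on_set_integral_eq_integral:
  assumes "bounded_borel_on S f" "{a..b} \<subseteq> S"
  shows "set_lebesgue_integral lborel {a..b} f = integral {a..b} f" "f integrable_on {a..b}"
  using set_borel_integral_eq_integral[OF bounded_borel_on_set_integrable[OF assms]] by auto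

lemma continuous_on_imp_bounded_borel_on:
  assumes "compact S" "continuous_on S f"
  shows "bounded_borel_on S f"
  unfolding bounded_borel_on_def
proof
  show "set_borel_measurable borel S f"
    using assms by (intro set_measurable_continuous_on) (auto intro: borel_closed compact_imp_closed)
  show "bounded (f ` S)"
    using assms by (intro compact_imp_bounded compact_continuous_image)
qed

lemma bounded_borel_on_add:
  assumes "bounded_borel_on S f" "bounded_borel_on S g"
  shows "bounded_borel_on S (\<lambda>r. f r + g r)"
proof -
  obtain B B' where f: "set_borel_measurable borel S f" "\<And>r. r \<in> S \<Longrightarrow> \<bar>f r\<bar> \<le> B"
    and g: "set_borel_measurable borel S g" "\<And>r. r \<in> S \<Longrightarrow> \<bar>g r\<bar> \<le> B'"
    using assms by (metis bounded_borel_onE)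
  have "set_borel_measurable borel S (\<lambda>r. f r + g r)"
    using f(1) g(1) by (simp add: set_borel_measurable_def distrib_left borel_measurable_add)
  moreover have "\<bar>f r + g r\<bar> \<le> B + B'" if "r \<in> S" for r
    using f(2)[OF that] g(2)[OF that] by linarith
  ultimately show ?thesis
    by (rule bounded_borel_onI)
qed

lemma bounded_borel_on_sum:
  "finite I \<Longrightarrow> (\<And>j. j \<in> I \<Longrightarrow> bounded_borel_on S (f j)) \<Longrightarrow> bounded_borel_on S (\<lambda>r. \<Sum>j\<in>I. f j r)"
proof (induction I rule: finite_induct)
  case empty
  show ?case
    by (rule bounded_borel_onI[where B = 0]) (simp_all add: set_borel_measurable_def)
qed (simp add: bounded_borel_on_add)

lemma bounded_borel_on_cmult:
  assumes "bounded_borel_on S f"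
  shows "bounded_borel_on S (\<lambda>r. c * f r)"
proof -
  obtain B where "set_borel_measurable borel S f" "\<And>r. r \<in> S \<Longrightarrow> \<bar>f r\<bar> \<le> B"
    using bounded_borel_onE[OF assms] by blast
  then show ?thesis
    by (intro bounded_borel_onI[where B = "\<bar>c\<bar> * B"])
       (auto simp: set_borel_measurable_def abs_mult mult.left_commute[of _ c] intro: mult_left_mono)
qed

lemma bounded_borel_on_if_ereal_less:
  fixes \<sigma> :: ereal
  assumes f: "continuous_on {r. 0 \<le> r \<and> r \<le> T \<and> ereal r < \<sigma>} f"
    and g: "continuous_on {0..T} g"
    and bound: "\<And>r. r \<in> {0..T} \<Longrightarrow> \<bar>if ereal r < \<sigma> then f r else g r\<bar> \<le> B"
  shows "bounded_borel_on {0..T} (\<lambda>r. if ereal r < \<sigma> then f r else g r)"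
proof (rule bounded_borel_onI[OF _ bound])
  let ?A = "{r. 0 \<le> r \<and> r \<le> T \<and> ereal r < \<sigma>}" and ?B = "{r. 0 \<le> r \<and> r \<le> T \<and> \<not> ereal r < \<sigma>}"
  have "?A \<in> sets borel" "?B \<in> sets borel"
    by measurable
  moreover have "continuous_on ?B g"
    using g by (rule continuous_on_subset) auto
  ultimately have "(\<lambda>r. indicator ?A r *\<^sub>R f r + indicator ?B r *\<^sub>R g r) \<in> borel_measurable borel"
    using f by (intro borel_measurable_add borel_measurable_continuous_on_indicator)
  moreover have "(\<lambda>r. indicator ?A r *\<^sub>R f r + indicator ?B r *\<^sub>R g r)
      = (\<lambda>r. indicator {0..T} r *\<^sub>R (if ereal r < \<sigma> then f r else g r))"
    by (auto simp: indicator_def fun_eq_iff)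
  ultimately show "set_borel_measurable borel {0..T} (\<lambda>r. if ereal r < \<sigma> then f r else g r)"
    unfolding set_borel_measurable_def by simp
qed

lemma set_integral_Icc_combine:
  assumes f: "bounded_borel_on S f" and sub: "{a..c} \<subseteq> S" and "a \<le> b" "b \<le> c"
  shows "set_lebesgue_integral lborel {a..c} f
    = set_lebesgue_integral lborel {a..b} f + set_lebesgue_integral lborel {b..c} f"
proof -
  have "{a..b} \<subseteq> S" "{b..c} \<subseteq> S"
    using sub \<open>a \<le> b\<close> \<open>b \<le> c\<close> by auto
  then show ?thesis
    using bounded_borel_on_set_integral_eq_integral[OF f] sub assms(3,4)
    by (simp add: Henstock_Kurzweil_Integration.integral_combine)
qed

lemma continuous_on_set_integral_Icc:
  assumes "bounded_borel_on {a..b} f"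
  shows "continuous_on {a..b} (\<lambda>t. set_lebesgue_integral lborel {a..t} f)"
proof -
  have "continuous_on {a..b} (\<lambda>t. integral {a..t} f)"
    using assms by (intro indefinite_integral_continuous_1 bounded_borel_on_set_integral_eq_integral) auto
  moreover have "integral {a..t} f = set_lebesgue_integral lborel {a..t} f" if "t \<in> {a..b}" for t
    using assms that by (subst bounded_borel_on_set_integral_eq_integral) auto
  ultimately show ?thesis
    by (rule continuous_on_eq)
qed

lemma set_integral_Icc_cong_before:
  assumes "bounded_borel_on S f" "bounded_borel_on S g" "{a..c} \<subseteq> S"
    and eq: "\<And>s. a \<le> s \<Longrightarrow> s < c \<Longrightarrow> f s = g s"
  shows "set_lebesgue_integral lborel {a..c} f = set_lebesgue_integral lborel {a..c} g"
proof -
  have "integral {a..c} f = integral {a..c} g"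
    by (rule integral_spike[of "{c}"]) (use eq in auto)
  then show ?thesis
    using bounded_borel_on_set_integral_eq_integral assms(1-3) by metis
qed

lemma abs_exp_diff_le_nonpos:
  fixes a b :: real
  assumes "a \<le> 0" "b \<le> 0"
  shows "\<bar>exp a - exp b\<bar> \<le> \<bar>a - b\<bar>"
proof -
  have *: "exp b - exp a \<le> b - a" if "a \<le> b" "b \<le> 0" for a b :: real
  proof -
    have "exp b - exp a = exp b * (1 - exp (a - b))"
      by (simp add: exp_diff algebra_simps)
    also have "\<dots> \<le> 1 - exp (a - b)"
      using that by (intro mult_left_le_one_le) auto
    also have "\<dots> \<le> b - a"
      using exp_ge_add_one_self[of "a - b"] by linarith
    finally show ?thesis .
  qed
  show ?thesis
    using *[of a b] *[of b a] assms by (cases "a \<le> b") auto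
qed

lemma power_div_fact_LIMSEQ_zero: "(\<lambda>n. C * (x::real) ^ n / fact n) \<longlonglongrightarrow> 0"
proof -
  have "(\<lambda>n. C * (x ^ n /\<^sub>R fact n)) \<longlonglongrightarrow> C * 0"
    by (intro tendsto_mult_left summable_LIMSEQ_zero[OF summable_exp_generic])
  then show ?thesis
    by (simp add: divide_inverse_commute mult.left_commute)
qed

section \<open>Kernel averages over killed particle paths\<close>

definition killed_paths :: "(nat \<Rightarrow> ereal) \<Rightarrow> (nat \<Rightarrow> real \<Rightarrow> real) \<Rightarrow> nat \<Rightarrow> real \<Rightarrow> real option" where
  "killed_paths \<sigma> y j r = (if ereal r < \<sigma> j then Some (y j r) else None)"

definition continuous_while_alive :: "real \<Rightarrow> nat \<Rightarrow> (nat \<Rightarrow> ereal) \<Rightarrow> (nat \<Rightarrow> real \<Rightarrow> real) \<Rightarrow> bool" where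
  "continuous_while_alive T N \<sigma> y \<longleftrightarrow> (\<forall>j<N. continuous_on {r. 0 \<le> r \<and> r \<le> T \<and> ereal r < \<sigma> j} (y j))"

lemma ext0_killed_paths: "ext0 f (killed_paths \<sigma> y j r) = (if ereal r < \<sigma> j then f (y j r) else 0)"
  by (simp add: ext0_def killed_paths_def)

lemma uN_killed_paths:
  "uN N \<kappa> (killed_paths \<sigma> y) r x = (1 / real N) * (\<Sum>j<N. if ereal r < \<sigma> j then \<kappa> (x - y j r) else 0)"
  by (simp add: uN_def ext0_killed_paths)

lemma killed_paths_cong:
  assumes "ereal r < \<sigma> j \<longleftrightarrow> ereal r < \<sigma>' j" "ereal r < \<sigma> j \<Longrightarrow> y j r = y' j r"
  shows "killed_paths \<sigma> y j r = killed_paths \<sigma>' y' j r"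
  using assms by (simp add: killed_paths_def)

lemma continuous_while_alive_mono:
  assumes y: "continuous_while_alive T N \<rho> y" and "t \<le> T" and le: "\<And>j. j < N \<Longrightarrow> \<sigma> j \<le> \<rho> j"
  shows "continuous_while_alive t N \<sigma> y"
  unfolding continuous_while_alive_def
proof (intro allI impI)
  fix j assume "j < N"
  then have "continuous_on {r. 0 \<le> r \<and> r \<le> T \<and> ereal r < \<rho> j} (y j)"
    using y unfolding continuous_while_alive_def by blast
  then show "continuous_on {r. 0 \<le> r \<and> r \<le> t \<and> ereal r < \<sigma> j} (y j)"
    by (rule continuous_on_subset) (use le[OF \<open>j < N\<close>] \<open>t \<le> T\<close> in \<open>auto dest: order.strict_trans2\<close>)
qed

lemma continuous_while_aliveI:
  "(\<And>j. j < N \<Longrightarrow> continuous_on {0..T} (y j)) \<Longrightarrow> continuous_while_alive T N \<sigma> y"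
  unfolding continuous_while_alive_def by (auto intro: continuous_on_subset[of "{0..T}"])

lemma continuous_while_alive_Icc:
  assumes "continuous_while_alive t' N \<rho> y" "j < N" "r \<le> t'" "ereal r < \<rho> j"
  shows "continuous_on {0..r} (y j)"
proof -
  have "{0..r} \<subseteq> {r'. 0 \<le> r' \<and> r' \<le> t' \<and> ereal r' < \<rho> j}"
    using assms(3,4) by (auto intro: le_less_trans[of _ "ereal r"])
  then show ?thesis
    using assms(1,2) unfolding continuous_while_alive_def by (meson continuous_on_subset)
qed

lemma intuN_cong:
  assumes "\<And>j r. j < N \<Longrightarrow> r \<in> {0..s} \<Longrightarrow> \<xi> j r = \<xi>' j r"
  shows "intuN N \<kappa> \<xi> s = intuN N \<kappa> \<xi>' s"
  unfolding intuN_def uN_def by (intro ext set_lebesgue_integral_cong) (auto simp: assms)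

lemma gradUN_eq_intuN: "gradUN N dK \<xi> s x = intuN N dK \<xi> s x"
  by (simp add: gradUN_def intuN_def)

locale lipschitz_kernel =
  fixes \<kappa> :: "real \<Rightarrow> real" and B L :: real
  assumes bounded: "\<And>v. \<bar>\<kappa> v\<bar> \<le> B" and lipschitz: "\<And>u v. \<bar>\<kappa> u - \<kappa> v\<bar> \<le> L * \<bar>u - v\<bar>"
begin

lemma bound_nonneg: "0 \<le> B"
  using bounded[of 0] by simp

lemma lipschitz_nonneg: "0 \<le> L"
  using lipschitz[of 1 0] by simp

lemma continuous: "continuous_on S \<kappa>"
proof -
  have "lipschitz_on L UNIV \<kappa>"
    by (rule lipschitz_onI) (use lipschitz lipschitz_nonneg in \<open>auto simp: dist_real_def\<close>)
  then show ?thesis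
    using lipschitz_on_continuous_on continuous_on_subset by blast
qed

lemma abs_uN_le: "\<bar>uN N \<kappa> \<xi> r x\<bar> \<le> B"
proof (cases "N = 0")
  case False
  have "\<bar>\<Sum>j<N. ext0 (\<lambda>y. \<kappa> (x - y)) (\<xi> j r)\<bar> \<le> (\<Sum>j<N. B)"
    by (rule order_trans[OF sum_abs sum_mono])
       (auto simp: ext0_def bounded bound_nonneg split: option.splits)
  then show ?thesis
    using False by (simp add: uN_def abs_mult field_simps)
qed (simp add: uN_def bound_nonneg)

lemma abs_intuN_le: "0 \<le> s \<Longrightarrow> \<bar>intuN N \<kappa> \<xi> s x\<bar> \<le> B * s"
  unfolding intuN_def using abs_set_integral_Icc_le[of 0 s _ B] abs_uN_le by simp

lemma bounded_borel_on_uN: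
  assumes "continuous_while_alive T N \<sigma> y"
  shows "bounded_borel_on {0..T} (\<lambda>r. uN N \<kappa> (killed_paths \<sigma> y) r x)"
  unfolding uN_killed_paths
proof (intro bounded_borel_on_cmult bounded_borel_on_sum bounded_borel_on_if_ereal_less[where B = B])
  fix j assume "j \<in> {..<N}"
  then show "continuous_on {r. 0 \<le> r \<and> r \<le> T \<and> ereal r < \<sigma> j} (\<lambda>r. \<kappa> (x - y j r))"
    using assms unfolding continuous_while_alive_def
    by (intro continuous_on_compose2[OF continuous _ subset_UNIV] continuous_intros) auto
qed (auto simp: bounded bound_nonneg)

lemma intuN_diff_le:
  assumes y: "continuous_while_alive T N \<sigma> y" and y': "continuous_while_alive T N \<sigma> y'"
    and s: "0 \<le> s" "s \<le> T" and "0 \<le> E"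
    and close: "\<And>j r. j < N \<Longrightarrow> r \<in> {0..s} \<Longrightarrow> ereal r < \<sigma> j \<Longrightarrow> \<bar>y j r - y' j r\<bar> \<le> E"
  shows "\<bar>intuN N \<kappa> (killed_paths \<sigma> y) s a - intuN N \<kappa> (killed_paths \<sigma> y') s b\<bar> \<le> L * (\<bar>a - b\<bar> + E) * s"
proof -
  have pointwise: "\<bar>uN N \<kappa> (killed_paths \<sigma> y) r a - uN N \<kappa> (killed_paths \<sigma> y') r b\<bar> \<le> L * (\<bar>a - b\<bar> + E)"
    if r: "r \<in> {0..s}" for r
  proof (cases "N = 0")
    case False
    have "\<bar>(if ereal r < \<sigma> j then \<kappa> (a - y j r) else 0) - (if ereal r < \<sigma> j then \<kappa> (b - y' j r) else 0)\<bar>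
        \<le> L * (\<bar>a - b\<bar> + E)" if "j < N" for j
    proof (cases "ereal r < \<sigma> j")
      case True
      have "\<bar>\<kappa> (a - y j r) - \<kappa> (b - y' j r)\<bar> \<le> L * \<bar>(a - y j r) - (b - y' j r)\<bar>"
        by (rule lipschitz)
      also have "\<dots> \<le> L * (\<bar>a - b\<bar> + E)"
        using close[OF that r True] lipschitz_nonneg by (intro mult_left_mono) auto
      finally show ?thesis
        using True by simp
    qed (use lipschitz_nonneg \<open>0 \<le> E\<close> in simp)
    then have "\<bar>\<Sum>j<N. (if ereal r < \<sigma> j then \<kappa> (a - y j r) else 0) - (if ereal r < \<sigma> j then \<kappa> (b - y' j r) else 0)\<bar>
        \<le> (\<Sum>j<N. L * (\<bar>a - b\<bar> + E))"
      by (intro order_trans[OF sum_abs sum_mono]) auto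
    then show ?thesis
      using False by (simp add: uN_killed_paths abs_mult field_simps sum_subtractf flip: right_diff_distrib)
  qed (use lipschitz_nonneg \<open>0 \<le> E\<close> in \<open>simp add: uN_def\<close>)
  have "set_integrable lborel {0..s} (\<lambda>r. uN N \<kappa> (killed_paths \<sigma> y) r a)"
    "set_integrable lborel {0..s} (\<lambda>r. uN N \<kappa> (killed_paths \<sigma> y') r b)"
    using s by (auto intro!: bounded_borel_on_set_integrable bounded_borel_on_uN y y')
  then have "intuN N \<kappa> (killed_paths \<sigma> y) s a - intuN N \<kappa> (killed_paths \<sigma> y') s b
      = set_lebesgue_integral lborel {0..s} (\<lambda>r. uN N \<kappa> (killed_paths \<sigma> y) r a - uN N \<kappa> (killed_paths \<sigma> y') r b)"
    unfolding intuN_def by (simp add: set_integral_diff(2))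
  also have "\<bar>\<dots>\<bar> \<le> L * (\<bar>a - b\<bar> + E) * (s - 0)"
    using pointwise s by (intro abs_set_integral_Icc_le) auto
  finally show ?thesis
    by simp
qed

lemma abs_intuN_diff_time_le:
  assumes y: "continuous_while_alive T N \<sigma> y" and s: "0 \<le> s" "s \<le> s'" "s' \<le> T"
  shows "\<bar>intuN N \<kappa> (killed_paths \<sigma> y) s' x - intuN N \<kappa> (killed_paths \<sigma> y) s x\<bar> \<le> B * (s' - s)"
proof -
  have "intuN N \<kappa> (killed_paths \<sigma> y) s' x - intuN N \<kappa> (killed_paths \<sigma> y) s x
      = set_lebesgue_integral lborel {s..s'} (\<lambda>r. uN N \<kappa> (killed_paths \<sigma> y) r x)"
    unfolding intuN_def using s by (subst set_integral_Icc_combine[OF bounded_borel_on_uN[OF y]]) auto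
  also have "\<bar>\<dots>\<bar> \<le> B * (s' - s)"
    using s abs_uN_le by (intro abs_set_integral_Icc_le) auto
  finally show ?thesis .
qed

lemma continuous_on_intuN:
  assumes y: "continuous_while_alive T N \<sigma> y"
  shows "continuous_on ({0..T} \<times> UNIV) (\<lambda>(s, x). intuN N \<kappa> (killed_paths \<sigma> y) s x)"
proof -
  let ?h = "\<lambda>(s, x). intuN N \<kappa> (killed_paths \<sigma> y) s x"
  have "lipschitz_on (B + L * \<bar>T\<bar>) ({0..T} \<times> UNIV) ?h"
  proof (rule lipschitz_onI)
    fix p q :: "real \<times> real" assume "p \<in> {0..T} \<times> UNIV" "q \<in> {0..T} \<times> UNIV"
    then obtain s x s' x' where pq: "p = (s, x)" "q = (s', x')" "s \<in> {0..T}" "s' \<in> {0..T}"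
      by auto
    have "\<bar>intuN N \<kappa> (killed_paths \<sigma> y) s x - intuN N \<kappa> (killed_paths \<sigma> y) s' x\<bar> \<le> B * \<bar>s - s'\<bar>"
      using abs_intuN_diff_time_le[OF y, of s s' x] abs_intuN_diff_time_le[OF y, of s' s x] pq
      by (cases "s \<le> s'") (auto simp: abs_minus_commute)
    moreover have "\<bar>intuN N \<kappa> (killed_paths \<sigma> y) s' x - intuN N \<kappa> (killed_paths \<sigma> y) s' x'\<bar>
        \<le> L * \<bar>x - x'\<bar> * \<bar>T\<bar>"
    proof -
      have "\<bar>intuN N \<kappa> (killed_paths \<sigma> y) s' x - intuN N \<kappa> (killed_paths \<sigma> y) s' x'\<bar>
          \<le> L * (\<bar>x - x'\<bar> + 0) * s'"
        using pq by (intro intuN_diff_le[OF y y]) auto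
      also have "\<dots> \<le> L * \<bar>x - x'\<bar> * \<bar>T\<bar>"
        using pq lipschitz_nonneg by (auto intro!: mult_left_mono)
      finally show ?thesis .
    qed
    moreover have "B * \<bar>s - s'\<bar> \<le> B * dist p q" "L * \<bar>x - x'\<bar> * \<bar>T\<bar> \<le> L * dist p q * \<bar>T\<bar>"
      using dist_fst_le[of p q] dist_snd_le[of p q] pq bound_nonneg lipschitz_nonneg
      by (auto simp: dist_real_def intro!: mult_left_mono mult_right_mono)
    ultimately show "dist (?h p) (?h q) \<le> (B + L * \<bar>T\<bar>) * dist p q"
      using pq by (simp add: dist_real_def algebra_simps)
  qed (use bound_nonneg lipschitz_nonneg in auto)
  then show ?thesis
    using lipschitz_on_continuous_on by blast
qed

end

section \<open>The drift along killed paths\<close>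

text \<open>\<open>dK\<close> plays the role of \<open>\<nabla>K\<close>; the argument never uses that it is the derivative of \<open>K\<close>.\<close>

locale killed_system =
  K: lipschitz_kernel K MK LK + dK: lipschitz_kernel dK MK' LK'
  for K dK :: "real \<Rightarrow> real" and MK LK MK' LK' :: real +
  fixes T :: real and N :: nat and lam c0 phi0 phi1 m :: real
  assumes T_pos: "0 < T" and K_nonneg: "\<And>x. 0 \<le> K x"
    and lam_pos: "0 < lam" and c0_pos: "0 < c0" and m_pos: "0 < m"
    and denominator_ge: "\<And>x. 0 \<le> x \<Longrightarrow> x \<le> MK * T \<Longrightarrow> m \<le> phi0 + phi1 * c0 * exp (- lam * x)"
begin

abbreviation drift :: "real \<Rightarrow> real \<Rightarrow> real" where
  "drift \<equiv> drift_b lam c0 phi0 phi1"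

definition drift_factor :: "real \<Rightarrow> real" where
  "drift_factor x = exp (- lam * x) / (phi0 + phi1 * c0 * exp (- lam * x))"

definition drift_bound :: real where
  "drift_bound = \<bar>phi1\<bar> * lam * c0 / m * (MK' * T)"

definition drift_lipschitz :: real where
  "drift_lipschitz = \<bar>phi1\<bar> * lam * c0 * (1 / m + MK' * T * \<bar>phi0\<bar> * lam / m\<^sup>2)"

lemma drift_eq: "drift x y = - (phi1 * lam * c0) * (drift_factor x * y)"
  by (simp add: drift_b_def drift_factor_def)

lemma drift_bound_nonneg: "0 \<le> drift_bound"
  unfolding drift_bound_def using lam_pos c0_pos m_pos dK.bound_nonneg T_pos by simp

lemma drift_lipschitz_nonneg: "0 \<le> drift_lipschitz"
  unfolding drift_lipschitz_def using lam_pos c0_pos m_pos dK.bound_nonneg T_pos by simp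

lemma abs_drift_factor_le:
  assumes "0 \<le> x" "x \<le> MK * T"
  shows "\<bar>drift_factor x\<bar> \<le> 1 / m"
proof -
  have "m \<le> phi0 + phi1 * c0 * exp (- lam * x)"
    using denominator_ge assms by blast
  moreover have "exp (- lam * x) \<le> 1"
    using assms lam_pos by simp
  ultimately show ?thesis
    using m_pos unfolding drift_factor_def
    by (simp add: abs_div_pos frac_le)
qed

lemma drift_factor_lipschitz:
  assumes x: "0 \<le> x" "x \<le> MK * T" and x': "0 \<le> x'" "x' \<le> MK * T"
  shows "\<bar>drift_factor x - drift_factor x'\<bar> \<le> \<bar>phi0\<bar> * lam / m\<^sup>2 * \<bar>x - x'\<bar>"
proof -
  define D where "D v = phi0 + phi1 * c0 * exp (- lam * v)" for v
  have D: "m \<le> D x" "m \<le> D x'"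
    using denominator_ge x x' unfolding D_def by blast+
  then have "0 < D x" "0 < D x'"
    using m_pos by linarith+
  then have "drift_factor x - drift_factor x' = phi0 * (exp (- lam * x) - exp (- lam * x')) / (D x * D x')"
    unfolding drift_factor_def D_def[symmetric] by (simp add: diff_frac_eq) (simp add: D_def algebra_simps)
  also have "\<bar>\<dots>\<bar> \<le> \<bar>phi0\<bar> * (lam * \<bar>x - x'\<bar>) / m\<^sup>2"
  proof -
    have "\<bar>exp (- lam * x) - exp (- lam * x')\<bar> \<le> \<bar>- lam * x - - lam * x'\<bar>"
      using x x' lam_pos by (intro abs_exp_diff_le_nonpos) auto
    also have "\<dots> = lam * \<bar>x - x'\<bar>"
      using lam_pos by (simp add: abs_mult flip: right_diff_distrib)
    finally have "\<bar>exp (- lam * x) - exp (- lam * x')\<bar> \<le> lam * \<bar>x - x'\<bar>" .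
    moreover have "m\<^sup>2 \<le> D x * D x'"
      using D m_pos unfolding power2_eq_square by (intro mult_mono) auto
    ultimately show ?thesis
      using m_pos \<open>0 < D x\<close> \<open>0 < D x'\<close> unfolding abs_divide abs_mult
      by (intro frac_le mult_left_mono) auto
  qed
  finally show ?thesis
    by simp
qed

lemma abs_drift_le:
  assumes "0 \<le> x" "x \<le> MK * T" "\<bar>y\<bar> \<le> MK' * T"
  shows "\<bar>drift x y\<bar> \<le> drift_bound"
proof -
  have "\<bar>drift x y\<bar> = \<bar>phi1\<bar> * lam * c0 * (\<bar>drift_factor x\<bar> * \<bar>y\<bar>)"
    using lam_pos c0_pos by (simp add: drift_eq abs_mult)
  also have "\<dots> \<le> \<bar>phi1\<bar> * lam * c0 * (1 / m * (MK' * T))"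
    using abs_drift_factor_le assms lam_pos c0_pos m_pos by (intro mult_left_mono mult_mono) auto
  finally show ?thesis
    by (simp add: drift_bound_def)
qed

lemma drift_lipschitz:
  assumes x: "0 \<le> x" "x \<le> MK * T" and x': "0 \<le> x'" "x' \<le> MK * T" and y': "\<bar>y'\<bar> \<le> MK' * T"
  shows "\<bar>drift x y - drift x' y'\<bar> \<le> drift_lipschitz * (\<bar>x - x'\<bar> + \<bar>y - y'\<bar>)"
proof -
  define a b where "a = 1 / m" and "b = MK' * T * \<bar>phi0\<bar> * lam / m\<^sup>2"
  have "0 \<le> a" "0 \<le> b"
    unfolding a_def b_def using m_pos lam_pos T_pos dK.bound_nonneg by auto
  have "drift_factor x * y - drift_factor x' * y'
      = drift_factor x * (y - y') + (drift_factor x - drift_factor x') * y'"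
    by (simp add: algebra_simps)
  then have "\<bar>drift_factor x * y - drift_factor x' * y'\<bar>
      \<le> \<bar>drift_factor x\<bar> * \<bar>y - y'\<bar> + \<bar>drift_factor x - drift_factor x'\<bar> * \<bar>y'\<bar>"
    by (metis abs_mult abs_triangle_ineq)
  also have "\<dots> \<le> a * \<bar>y - y'\<bar> + (\<bar>phi0\<bar> * lam / m\<^sup>2 * \<bar>x - x'\<bar>) * (MK' * T)"
    unfolding a_def using abs_drift_factor_le[OF x] drift_factor_lipschitz[OF x x'] y' m_pos
    by (intro add_mono mult_mono) auto
  also have "\<dots> = a * \<bar>y - y'\<bar> + b * \<bar>x - x'\<bar>"
    by (simp add: b_def)
  also have "\<dots> \<le> (a + b) * (\<bar>x - x'\<bar> + \<bar>y - y'\<bar>)"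
    using \<open>0 \<le> a\<close> \<open>0 \<le> b\<close> by (simp add: algebra_simps)
  finally have "\<bar>drift_factor x * y - drift_factor x' * y'\<bar> \<le> (a + b) * (\<bar>x - x'\<bar> + \<bar>y - y'\<bar>)" .
  moreover have "\<bar>drift x y - drift x' y'\<bar> = \<bar>phi1\<bar> * lam * c0 * \<bar>drift_factor x * y - drift_factor x' * y'\<bar>"
    using lam_pos c0_pos by (simp add: drift_eq abs_mult abs_minus_commute flip: right_diff_distrib)
  ultimately show ?thesis
    using lam_pos c0_pos unfolding drift_lipschitz_def a_def b_def
    by (simp add: mult.assoc mult_left_mono)
qed

lemma continuous_on_drift: "continuous_on ({x. 0 \<le> x \<and> x \<le> MK * T} \<times> UNIV) (\<lambda>(x, y). drift x y)"
proof -
  have "phi0 + phi1 * c0 * exp (- lam * x) \<noteq> 0" if "0 \<le> x" "x \<le> MK * T" for x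
    using denominator_ge[OF that] m_pos by linarith
  then show ?thesis
    unfolding drift_b_def case_prod_beta by (intro continuous_intros) auto
qed

lemma intuN_K_range:
  assumes "0 \<le> s" "s \<le> T"
  shows "0 \<le> intuN N K \<xi> s x \<and> intuN N K \<xi> s x \<le> MK * T"
proof
  show "0 \<le> intuN N K \<xi> s x"
    unfolding intuN_def uN_def
    by (intro set_integral_Icc_nonneg mult_nonneg_nonneg sum_nonneg)
       (auto simp: ext0_def K_nonneg split: option.splits)
  have "intuN N K \<xi> s x \<le> MK * s"
    using K.abs_intuN_le[OF assms(1)] by (rule abs_le_D1)
  also have "\<dots> \<le> MK * T"
    using assms K.bound_nonneg by (intro mult_left_mono) auto
  finally show "intuN N K \<xi> s x \<le> MK * T" .
qed

lemma abs_gradUN_le: "0 \<le> s \<Longrightarrow> s \<le> T \<Longrightarrow> \<bar>gradUN N dK \<xi> s x\<bar> \<le> MK' * T"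
  using dK.abs_intuN_le[of s] dK.bound_nonneg
  by (simp add: gradUN_eq_intuN) (meson mult_left_mono order_trans)

definition drift_at :: "(nat \<Rightarrow> ereal) \<Rightarrow> (nat \<Rightarrow> real \<Rightarrow> real) \<Rightarrow> nat \<Rightarrow> real \<Rightarrow> real" where
  "drift_at \<sigma> y i s = drift (intuN N K (killed_paths \<sigma> y) s (y i s)) (gradUN N dK (killed_paths \<sigma> y) s (y i s))"

definition drift_integral :: "(nat \<Rightarrow> ereal) \<Rightarrow> (nat \<Rightarrow> real \<Rightarrow> real) \<Rightarrow> nat \<Rightarrow> real \<Rightarrow> real" where
  "drift_integral \<sigma> y i t = set_lebesgue_integral lborel {0..t} (drift_at \<sigma> y i)"

lemma abs_drift_at_le: "0 \<le> s \<Longrightarrow> s \<le> T \<Longrightarrow> \<bar>drift_at \<sigma> y i s\<bar> \<le> drift_bound"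
  unfolding drift_at_def using intuN_K_range abs_gradUN_le by (intro abs_drift_le) auto

lemma abs_drift_integral_le: "0 \<le> t \<Longrightarrow> t \<le> T \<Longrightarrow> \<bar>drift_integral \<sigma> y i t\<bar> \<le> drift_bound * T"
  unfolding drift_integral_def
  using abs_set_integral_Icc_le[of 0 t "drift_at \<sigma> y i" drift_bound] abs_drift_at_le drift_bound_nonneg
  by (smt (verit, best) atLeastAtMost_iff mult_left_mono)

lemma continuous_on_drift_at:
  assumes y: "continuous_while_alive t' N \<sigma> y" and t: "0 \<le> t" "t \<le> t'" "t' \<le> T"
    and yi: "continuous_on {0..t} (y i)"
  shows "continuous_on {0..t} (drift_at \<sigma> y i)"
proof -
  have K: "continuous_on {0..t} (\<lambda>s. intuN N K (killed_paths \<sigma> y) s (y i s))"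
    by (rule continuous_on_compose2[OF K.continuous_on_intuN[OF y], of _ "\<lambda>s. (s, y i s)", simplified])
       (use t in \<open>auto intro!: continuous_intros yi\<close>)
  have dK: "continuous_on {0..t} (\<lambda>s. intuN N dK (killed_paths \<sigma> y) s (y i s))"
    by (rule continuous_on_compose2[OF dK.continuous_on_intuN[OF y], of _ "\<lambda>s. (s, y i s)", simplified])
       (use t in \<open>auto intro!: continuous_intros yi\<close>)
  have "continuous_on {0..t}
      (\<lambda>s. (\<lambda>(a, b). drift a b) (intuN N K (killed_paths \<sigma> y) s (y i s), intuN N dK (killed_paths \<sigma> y) s (y i s)))"
    by (rule continuous_on_compose2[OF continuous_on_drift])
       (use t intuN_K_range in \<open>auto intro!: continuous_intros K dK\<close>)
  then show ?thesis
    unfolding drift_at_def gradUN_eq_intuN by simp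
qed

lemma continuous_on_drift_integral:
  assumes "\<And>j. j < N \<Longrightarrow> continuous_on {0..T} (y j)" "i < N"
  shows "continuous_on {0..T} (drift_integral \<sigma> y i)"
  unfolding drift_integral_def
  using assms T_pos
  by (intro continuous_on_set_integral_Icc continuous_on_imp_bounded_borel_on continuous_on_drift_at
      continuous_while_aliveI) auto

lemma drift_integral_cong:
  assumes "\<And>j r. j < N \<Longrightarrow> r \<in> {0..t} \<Longrightarrow> killed_paths \<sigma> y j r = killed_paths \<sigma>' y' j r"
    and "\<And>s. s \<in> {0..t} \<Longrightarrow> y i s = y' i s"
  shows "drift_integral \<sigma> y i t = drift_integral \<sigma>' y' i t"
  unfolding drift_integral_def drift_at_def gradUN_eq_intuN
  using assms intuN_cong[of N _ "killed_paths \<sigma> y" "killed_paths \<sigma>' y'"]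
  by (intro set_lebesgue_integral_cong) auto

end

section \<open>Particles with prescribed kill times\<close>

context killed_system
begin

definition picard_rate :: real where
  "picard_rate = 2 * T * drift_lipschitz * (LK + LK') + 1"

lemma picard_rate_ge_1: "1 \<le> picard_rate"
  unfolding picard_rate_def using T_pos drift_lipschitz_nonneg K.lipschitz_nonneg dK.lipschitz_nonneg
  by simp

lemma drift_at_diff_le:
  assumes y: "continuous_while_alive t' N \<sigma> y" and y': "continuous_while_alive t' N \<sigma> y'"
    and s: "0 \<le> s" "s \<le> t'" "t' \<le> T" and "0 \<le> E"
    and close: "\<And>j r. j < N \<Longrightarrow> r \<in> {0..s} \<Longrightarrow> ereal r < \<sigma> j \<Longrightarrow> \<bar>y j r - y' j r\<bar> \<le> E"
    and close_i: "\<bar>y i s - y' i s\<bar> \<le> E"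
  shows "\<bar>drift_at \<sigma> y i s - drift_at \<sigma> y' i s\<bar> \<le> (picard_rate - 1) * E"
proof -
  have "\<bar>intuN N K (killed_paths \<sigma> y) s (y i s) - intuN N K (killed_paths \<sigma> y') s (y' i s)\<bar>
      \<le> LK * (\<bar>y i s - y' i s\<bar> + E) * s"
    by (rule K.intuN_diff_le[OF y y' s(1,2) \<open>0 \<le> E\<close> close])
  also have "\<dots> \<le> LK * (2 * E) * T"
    using close_i s K.lipschitz_nonneg \<open>0 \<le> E\<close> by (intro mult_mono mult_left_mono) auto
  finally have K: "\<bar>intuN N K (killed_paths \<sigma> y) s (y i s) - intuN N K (killed_paths \<sigma> y') s (y' i s)\<bar>
      \<le> LK * (2 * E) * T" .
  have "\<bar>intuN N dK (killed_paths \<sigma> y) s (y i s) - intuN N dK (killed_paths \<sigma> y') s (y' i s)\<bar>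
      \<le> LK' * (\<bar>y i s - y' i s\<bar> + E) * s"
    by (rule dK.intuN_diff_le[OF y y' s(1,2) \<open>0 \<le> E\<close> close])
  also have "\<dots> \<le> LK' * (2 * E) * T"
    using close_i s dK.lipschitz_nonneg \<open>0 \<le> E\<close> by (intro mult_mono mult_left_mono) auto
  finally have dK: "\<bar>intuN N dK (killed_paths \<sigma> y) s (y i s) - intuN N dK (killed_paths \<sigma> y') s (y' i s)\<bar>
      \<le> LK' * (2 * E) * T" .
  have "\<bar>drift_at \<sigma> y i s - drift_at \<sigma> y' i s\<bar>
      \<le> drift_lipschitz * (\<bar>intuN N K (killed_paths \<sigma> y) s (y i s) - intuN N K (killed_paths \<sigma> y') s (y' i s)\<bar>
        + \<bar>intuN N dK (killed_paths \<sigma> y) s (y i s) - intuN N dK (killed_paths \<sigma> y') s (y' i s)\<bar>)"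
    unfolding drift_at_def gradUN_eq_intuN
    using intuN_K_range abs_gradUN_le[unfolded gradUN_eq_intuN] s by (intro drift_lipschitz) auto
  also have "\<dots> \<le> drift_lipschitz * (LK * (2 * E) * T + LK' * (2 * E) * T)"
    using K dK drift_lipschitz_nonneg by (intro mult_left_mono add_mono) auto
  also have "\<dots> = (picard_rate - 1) * E"
    by (simp add: picard_rate_def algebra_simps)
  finally show ?thesis .
qed

lemma drift_integral_diff_le:
  assumes y: "continuous_while_alive t' N \<sigma> y" and y': "continuous_while_alive t' N \<sigma> y'"
    and t: "0 \<le> t" "t \<le> t'" "t' \<le> T"
    and cont: "continuous_on {0..t} (y i)" "continuous_on {0..t} (y' i)" and "0 \<le> C"
    and close: "\<And>j r. j < N \<Longrightarrow> r \<in> {0..t} \<Longrightarrow> ereal r < \<sigma> j \<Longrightarrow>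
      \<bar>y j r - y' j r\<bar> \<le> C * (picard_rate * r) ^ n / fact n"
    and close_i: "\<And>s. s \<in> {0..t} \<Longrightarrow> \<bar>y i s - y' i s\<bar> \<le> C * (picard_rate * s) ^ n / fact n"
  shows "\<bar>drift_integral \<sigma> y i t - drift_integral \<sigma> y' i t\<bar> \<le> C * (picard_rate * t) ^ Suc n / fact (Suc n)"
proof -
  define D where "D s = C * (picard_rate * s) ^ n / fact n" for s
  have D_mono: "D r \<le> D s" if "0 \<le> r" "r \<le> s" for r s
    unfolding D_def using that \<open>0 \<le> C\<close> picard_rate_ge_1
    by (intro divide_right_mono mult_left_mono power_mono) auto
  have pointwise: "\<bar>drift_at \<sigma> y i s - drift_at \<sigma> y' i s\<bar> \<le> (picard_rate - 1) * D s" if s: "s \<in> {0..t}" for s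
  proof (rule drift_at_diff_le[OF y y'])
    show "0 \<le> D s"
      unfolding D_def using s \<open>0 \<le> C\<close> picard_rate_ge_1 by simp
    show "\<bar>y j r - y' j r\<bar> \<le> D s" if "j < N" "r \<in> {0..s}" "ereal r < \<sigma> j" for j r
      using close[of j r] D_mono[of r s] that s unfolding D_def by auto
  qed (use s t close_i[unfolded D_def[symmetric]] in auto)
  have integrable: "set_integrable lborel {0..t} (drift_at \<sigma> y i)" "set_integrable lborel {0..t} (drift_at \<sigma> y' i)"
    using cont t by (auto intro!: borel_integrable_atLeastAtMost' continuous_on_drift_at y y')
  have "\<bar>drift_integral \<sigma> y i t - drift_integral \<sigma> y' i t\<bar>
      \<le> set_lebesgue_integral lborel {0..t} (\<lambda>s. (picard_rate - 1) * C * picard_rate ^ n / fact n * s ^ n)"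
    unfolding drift_integral_def
    using pointwise
    by (intro abs_set_integral_diff_le[OF integrable borel_integrable_atLeastAtMost'] continuous_intros)
       (auto simp: D_def power_mult_distrib mult.assoc)
  also have "\<dots> = (picard_rate - 1) * picard_rate ^ n * (C * t ^ Suc n / fact (Suc n))"
    using t by (subst set_integral_Icc_power) (simp_all add: field_simps)
  also have "\<dots> \<le> picard_rate ^ Suc n * (C * t ^ Suc n / fact (Suc n))"
    using t \<open>0 \<le> C\<close> picard_rate_ge_1 by (intro mult_right_mono) auto
  finally show ?thesis
    by (simp add: power_mult_distrib mult_ac)
qed

lemma abs_drift_integral_diff_le_uniform:
  assumes y: "\<And>j. j < N \<Longrightarrow> continuous_on {0..T} (y j)" and y': "\<And>j. j < N \<Longrightarrow> continuous_on {0..T} (y' j)"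
    and "i < N" "t \<in> {0..T}" "0 \<le> \<epsilon>" and close: "\<And>j r. j < N \<Longrightarrow> r \<in> {0..T} \<Longrightarrow> \<bar>y j r - y' j r\<bar> \<le> \<epsilon>"
  shows "\<bar>drift_integral \<sigma> y i t - drift_integral \<sigma> y' i t\<bar> \<le> \<epsilon> * (picard_rate * T)"
proof -
  have "\<bar>drift_integral \<sigma> y i t - drift_integral \<sigma> y' i t\<bar> \<le> \<epsilon> * (picard_rate * t) ^ Suc 0 / fact (Suc 0)"
    using assms
    by (intro drift_integral_diff_le[where t' = T] continuous_while_aliveI)
       (auto intro: continuous_on_subset[OF y] continuous_on_subset[OF y'])
  also have "\<dots> \<le> \<epsilon> * (picard_rate * T)"
    using assms picard_rate_ge_1 by (auto intro!: mult_left_mono)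
  finally show ?thesis .
qed

text \<open>The drift is computed with kill times \<open>\<sigma>\<close>, while the equation is only required before
  the possibly later kill times \<open>\<rho>\<close>.\<close>

lemma alive_paths_unique:
  assumes "t' \<le> T" and le: "\<And>j. j < N \<Longrightarrow> \<sigma> j \<le> \<rho> j"
    and y: "continuous_while_alive t' N \<rho> y" and y': "continuous_while_alive t' N \<rho> y'"
    and eq: "\<And>i t. i < N \<Longrightarrow> t \<in> {0..t'} \<Longrightarrow> ereal t < \<rho> i \<Longrightarrow>
      y i t = x\<^sub>0 i + drift_integral \<sigma> y i t + sqrt 2 * w i t"
    and eq': "\<And>i t. i < N \<Longrightarrow> t \<in> {0..t'} \<Longrightarrow> ereal t < \<rho> i \<Longrightarrow>
      y' i t = x\<^sub>0 i + drift_integral \<sigma> y' i t + sqrt 2 * w i t"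
    and i: "i < N" "t \<in> {0..t'}" "ereal t < \<rho> i"
  shows "y i t = y' i t"
proof -
  define C where "C = 2 * drift_bound * T"
  have "0 \<le> C"
    unfolding C_def using drift_bound_nonneg T_pos by simp
  have diff: "y j r - y' j r = drift_integral \<sigma> y j r - drift_integral \<sigma> y' j r"
    if "j < N" "r \<in> {0..t'}" "ereal r < \<rho> j" for j r
    using eq[OF that] eq'[OF that] by simp
  have "\<bar>y j r - y' j r\<bar> \<le> C * (picard_rate * r) ^ n / fact n"
    if "j < N" "r \<in> {0..t'}" "ereal r < \<rho> j" for n j r
    using that
  proof (induction n arbitrary: j r)
    case 0
    then have "\<bar>drift_integral \<sigma> y j r\<bar> \<le> drift_bound * T" "\<bar>drift_integral \<sigma> y' j r\<bar> \<le> drift_bound * T"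
      using \<open>t' \<le> T\<close> by (auto intro!: abs_drift_integral_le)
    then show ?case
      using diff[OF 0] unfolding C_def by simp
  next
    case (Suc n)
    have r: "0 \<le> r" "r \<le> t'"
      using Suc.prems by auto
    have "\<bar>drift_integral \<sigma> y j r - drift_integral \<sigma> y' j r\<bar> \<le> C * (picard_rate * r) ^ Suc n / fact (Suc n)"
    proof (rule drift_integral_diff_le)
      show "continuous_while_alive t' N \<sigma> y" "continuous_while_alive t' N \<sigma> y'"
        using y y' le by (auto intro: continuous_while_alive_mono)
      show "continuous_on {0..r} (y j)" "continuous_on {0..r} (y' j)"
        using Suc.prems r y y' by (auto intro: continuous_while_alive_Icc)
      show "\<bar>y k s - y' k s\<bar> \<le> C * (picard_rate * s) ^ n / fact n"
        if "k < N" "s \<in> {0..r}" "ereal s < \<sigma> k" for k s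
        using Suc.IH[of k s] that r le[of k] by (auto dest: order.strict_trans2)
      show "\<bar>y j s - y' j s\<bar> \<le> C * (picard_rate * s) ^ n / fact n" if "s \<in> {0..r}" for s
        using Suc.IH[of j s] Suc.prems that le_less_trans[of "ereal s" "ereal r" "\<rho> j"] by auto
    qed (use r \<open>t' \<le> T\<close> \<open>0 \<le> C\<close> in auto)
    then show ?case
      using diff[OF Suc.prems] by simp
  qed
  then have "\<bar>y i t - y' i t\<bar> \<le> 0"
    using i by (intro LIMSEQ_le_const[OF power_div_fact_LIMSEQ_zero[of C "picard_rate * t"]]) auto
  then show ?thesis
    by simp
qed


definition picard_step :: "(nat \<Rightarrow> real) \<Rightarrow> (nat \<Rightarrow> real \<Rightarrow> real) \<Rightarrow> (nat \<Rightarrow> ereal)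
    \<Rightarrow> (nat \<Rightarrow> real \<Rightarrow> real) \<Rightarrow> nat \<Rightarrow> real \<Rightarrow> real" where
  "picard_step x\<^sub>0 w \<sigma> y i t = x\<^sub>0 i + drift_integral \<sigma> y i t + sqrt 2 * w i t"

definition picard_iter :: "(nat \<Rightarrow> real) \<Rightarrow> (nat \<Rightarrow> real \<Rightarrow> real) \<Rightarrow> (nat \<Rightarrow> ereal) \<Rightarrow> nat \<Rightarrow> nat \<Rightarrow> real \<Rightarrow> real" where
  "picard_iter x\<^sub>0 w \<sigma> n = (picard_step x\<^sub>0 w \<sigma> ^^ n) (\<lambda>i t. 0)"

definition paths_for_kills :: "(nat \<Rightarrow> real) \<Rightarrow> (nat \<Rightarrow> real \<Rightarrow> real) \<Rightarrow> (nat \<Rightarrow> ereal) \<Rightarrow> nat \<Rightarrow> real \<Rightarrow> real" where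
  "paths_for_kills x\<^sub>0 w \<sigma> i t = lim (\<lambda>n. picard_iter x\<^sub>0 w \<sigma> n i t)"

lemma picard_iter_0: "picard_iter x\<^sub>0 w \<sigma> 0 = (\<lambda>i t. 0)"
  by (simp add: picard_iter_def)

lemma picard_iter_Suc: "picard_iter x\<^sub>0 w \<sigma> (Suc n) = picard_step x\<^sub>0 w \<sigma> (picard_iter x\<^sub>0 w \<sigma> n)"
  by (simp add: picard_iter_def)

context
  fixes x\<^sub>0 :: "nat \<Rightarrow> real" and w :: "nat \<Rightarrow> real \<Rightarrow> real" and \<sigma> :: "nat \<Rightarrow> ereal"
  assumes w: "\<And>i. i < N \<Longrightarrow> continuous_on {0..T} (w i)"
begin

lemma continuous_on_picard_iter: "j < N \<Longrightarrow> continuous_on {0..T} (picard_iter x\<^sub>0 w \<sigma> n j)"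
proof (induction n arbitrary: j)
  case (Suc n)
  then show ?case
    unfolding picard_iter_Suc picard_step_def
    by (intro continuous_intros continuous_on_drift_integral w) auto
qed (simp add: picard_iter_0)

lemma picard_iter_Suc_diff_le:
  obtains C where "0 \<le> C" "\<And>n i t. i < N \<Longrightarrow> t \<in> {0..T} \<Longrightarrow>
    \<bar>picard_iter x\<^sub>0 w \<sigma> (Suc n) i t - picard_iter x\<^sub>0 w \<sigma> n i t\<bar> \<le> C * (picard_rate * t) ^ n / fact n"
proof -
  have "bounded (\<Union>i<N. w i ` {0..T})"
    using w by (auto intro!: bounded_UN compact_imp_bounded compact_continuous_image)
  then obtain Bw where Bw: "\<And>i t. i < N \<Longrightarrow> t \<in> {0..T} \<Longrightarrow> \<bar>w i t\<bar> \<le> Bw"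
    unfolding bounded_iff by fastforce
  define C where "C = (\<Sum>i<N. \<bar>x\<^sub>0 i\<bar>) + drift_bound * T + sqrt 2 * \<bar>Bw\<bar>"
  have "0 \<le> C"
    unfolding C_def using drift_bound_nonneg T_pos by (auto intro!: add_nonneg_nonneg sum_nonneg)
  have "\<bar>picard_iter x\<^sub>0 w \<sigma> (Suc n) i t - picard_iter x\<^sub>0 w \<sigma> n i t\<bar> \<le> C * (picard_rate * t) ^ n / fact n"
    if "i < N" "t \<in> {0..T}" for n i t
    using that
  proof (induction n arbitrary: i t)
    case 0
    have "\<bar>x\<^sub>0 i\<bar> \<le> (\<Sum>i<N. \<bar>x\<^sub>0 i\<bar>)"
      using 0 by (intro member_le_sum) auto
    moreover have "\<bar>drift_integral \<sigma> (\<lambda>i t. 0) i t\<bar> \<le> drift_bound * T"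
      using 0 by (intro abs_drift_integral_le) auto
    moreover have "\<bar>sqrt 2 * w i t\<bar> \<le> sqrt 2 * \<bar>Bw\<bar>"
      using Bw[OF 0] by (auto simp: abs_mult intro: mult_left_mono)
    ultimately show ?case
      unfolding picard_iter_Suc picard_iter_0 picard_step_def C_def by simp
  next
    case (Suc n)
    have "\<bar>drift_integral \<sigma> (picard_iter x\<^sub>0 w \<sigma> (Suc n)) i t - drift_integral \<sigma> (picard_iter x\<^sub>0 w \<sigma> n) i t\<bar>
        \<le> C * (picard_rate * t) ^ Suc n / fact (Suc n)"
      using Suc \<open>0 \<le> C\<close> T_pos
      by (intro drift_integral_diff_le[where t' = T] continuous_while_aliveI continuous_on_picard_iter)
         (auto elim: continuous_on_subset[OF continuous_on_picard_iter])
    then show ?case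
      unfolding picard_iter_Suc[of _ _ _ "Suc n"] picard_iter_Suc[of _ _ _ n] picard_step_def by simp
  qed
  with \<open>0 \<le> C\<close> that show ?thesis
    by blast
qed

lemma uniform_limit_picard_iter:
  assumes "i < N"
  shows "uniform_limit {0..T} (\<lambda>n. picard_iter x\<^sub>0 w \<sigma> n i) (paths_for_kills x\<^sub>0 w \<sigma> i) sequentially"
proof -
  obtain C where "0 \<le> C" and C: "\<And>n i t. i < N \<Longrightarrow> t \<in> {0..T} \<Longrightarrow>
      \<bar>picard_iter x\<^sub>0 w \<sigma> (Suc n) i t - picard_iter x\<^sub>0 w \<sigma> n i t\<bar> \<le> C * (picard_rate * t) ^ n / fact n"
    using picard_iter_Suc_diff_le by blast
  define d where "d k t = picard_iter x\<^sub>0 w \<sigma> (Suc k) i t - picard_iter x\<^sub>0 w \<sigma> k i t" for k t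
  have telescope: "picard_iter x\<^sub>0 w \<sigma> n i t = (\<Sum>k<n. d k t)" for n t
    unfolding d_def by (induction n) (auto simp: picard_iter_0)
  have "norm (d k t) \<le> C * (picard_rate * T) ^ k / fact k" if "t \<in> {0..T}" for k t
    using C[OF assms that, of k] that \<open>0 \<le> C\<close> picard_rate_ge_1 unfolding d_def
    by (smt (verit, ccfv_SIG) atLeastAtMost_iff divide_right_mono fact_ge_zero mult_left_mono
        mult_nonneg_nonneg power_mono real_norm_def)
  moreover have "summable (\<lambda>k. C * (picard_rate * T) ^ k / fact k)"
    using summable_mult[OF summable_exp_generic[of "picard_rate * T"], of C]
    by (simp add: divide_inverse_commute mult.left_commute)
  ultimately have unif: "uniform_limit {0..T} (\<lambda>n t. \<Sum>k<n. d k t) (\<lambda>t. \<Sum>k. d k t) sequentially"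
    by (rule Weierstrass_m_test)
  have limit: "paths_for_kills x\<^sub>0 w \<sigma> i t = (\<Sum>k. d k t)" if "t \<in> {0..T}" for t
    using tendsto_uniform_limitI[OF unif that] unfolding paths_for_kills_def telescope
    by (rule limI)
  show ?thesis
    using unif by (rule uniform_limit_cong'[THEN iffD1, rotated -1]) (auto simp: limit telescope)
qed

lemma continuous_on_paths_for_kills: "i < N \<Longrightarrow> continuous_on {0..T} (paths_for_kills x\<^sub>0 w \<sigma> i)"
  by (rule uniform_limit_theorem[OF _ uniform_limit_picard_iter])
     (auto intro!: always_eventually continuous_on_picard_iter)

lemma picard_iter_LIMSEQ:
  "i < N \<Longrightarrow> t \<in> {0..T} \<Longrightarrow> (\<lambda>n. picard_iter x\<^sub>0 w \<sigma> n i t) \<longlonglongrightarrow> paths_for_kills x\<^sub>0 w \<sigma> i t"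
  by (rule tendsto_uniform_limitI[OF uniform_limit_picard_iter])

lemma drift_integral_picard_iter_LIMSEQ:
  assumes "i < N" "t \<in> {0..T}"
  shows "(\<lambda>n. drift_integral \<sigma> (picard_iter x\<^sub>0 w \<sigma> n) i t) \<longlonglongrightarrow> drift_integral \<sigma> (paths_for_kills x\<^sub>0 w \<sigma>) i t"
proof (rule LIMSEQ_I)
  fix e :: real assume "0 < e"
  define \<epsilon> where "\<epsilon> = e / (2 * (picard_rate * T))"
  have "0 < picard_rate * T"
    using picard_rate_ge_1 T_pos by simp
  then have "0 < \<epsilon>" and "\<epsilon> * (picard_rate * T) < e"
    unfolding \<epsilon>_def using \<open>0 < e\<close> by simp_all
  have "eventually (\<lambda>n. \<forall>j\<in>{..<N}. \<forall>r\<in>{0..T}. dist (picard_iter x\<^sub>0 w \<sigma> n j r) (paths_for_kills x\<^sub>0 w \<sigma> j r) < \<epsilon>)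
      sequentially"
    using uniform_limitD[OF uniform_limit_picard_iter \<open>0 < \<epsilon>\<close>] by (intro eventually_ball_finite) auto
  then obtain n0 where n0: "\<And>n j r. n \<ge> n0 \<Longrightarrow> j < N \<Longrightarrow> r \<in> {0..T} \<Longrightarrow>
      \<bar>picard_iter x\<^sub>0 w \<sigma> n j r - paths_for_kills x\<^sub>0 w \<sigma> j r\<bar> \<le> \<epsilon>"
    unfolding eventually_sequentially dist_real_def by (meson less_imp_le lessThan_iff)
  have "\<bar>drift_integral \<sigma> (picard_iter x\<^sub>0 w \<sigma> n) i t - drift_integral \<sigma> (paths_for_kills x\<^sub>0 w \<sigma>) i t\<bar>
      \<le> \<epsilon> * (picard_rate * T)" if "n \<ge> n0" for n
    using assms n0[OF that] \<open>0 < \<epsilon>\<close>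
    by (intro abs_drift_integral_diff_le_uniform continuous_on_picard_iter continuous_on_paths_for_kills) auto
  with \<open>\<epsilon> * (picard_rate * T) < e\<close> show "\<exists>n0. \<forall>n\<ge>n0. norm (drift_integral \<sigma> (picard_iter x\<^sub>0 w \<sigma> n) i t
      - drift_integral \<sigma> (paths_for_kills x\<^sub>0 w \<sigma>) i t) < e"
    by fastforce
qed

lemma paths_for_kills_eq:
  assumes "i < N" "t \<in> {0..T}"
  shows "paths_for_kills x\<^sub>0 w \<sigma> i t = x\<^sub>0 i + drift_integral \<sigma> (paths_for_kills x\<^sub>0 w \<sigma>) i t + sqrt 2 * w i t"
proof (rule LIMSEQ_unique)
  show "(\<lambda>n. picard_iter x\<^sub>0 w \<sigma> (Suc n) i t) \<longlonglongrightarrow> paths_for_kills x\<^sub>0 w \<sigma> i t"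
    using picard_iter_LIMSEQ[OF assms] by (rule LIMSEQ_Suc)
  show "(\<lambda>n. picard_iter x\<^sub>0 w \<sigma> (Suc n) i t)
      \<longlonglongrightarrow> x\<^sub>0 i + drift_integral \<sigma> (paths_for_kills x\<^sub>0 w \<sigma>) i t + sqrt 2 * w i t"
    unfolding picard_iter_Suc picard_step_def
    by (intro tendsto_intros drift_integral_picard_iter_LIMSEQ assms)
qed

end

end

section \<open>Kill times\<close>

context killed_system
begin

definition kill_rate :: "(nat \<Rightarrow> real \<Rightarrow> real option) \<Rightarrow> nat \<Rightarrow> real \<Rightarrow> real" where
  "kill_rate \<xi> i s = lam * c0 * exp (- lam * ext0 (intuN N K \<xi> s) (\<xi> i s))"

definition kill_clock :: "(nat \<Rightarrow> real \<Rightarrow> real option) \<Rightarrow> nat \<Rightarrow> real \<Rightarrow> real" where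
  "kill_clock \<xi> i c = set_lebesgue_integral lborel {0..c} (kill_rate \<xi> i)"

lemma kill_time_eq_Inf:
  "kill_time T N K lam c0 z \<xi> i = Inf (ereal ` {c. 0 \<le> c \<and> c \<le> T \<and> z \<le> kill_clock \<xi> i c})"
  unfolding kill_time_def kill_clock_def kill_rate_def by (rule arg_cong[where f = Inf]) blast

lemma kill_rate_killed_paths: "kill_rate (killed_paths \<sigma> y) i s =
    (if ereal s < \<sigma> i then lam * c0 * exp (- lam * intuN N K (killed_paths \<sigma> y) s (y i s)) else lam * c0)"
  unfolding kill_rate_def by (simp add: ext0_killed_paths)

lemma kill_rate_nonneg: "0 \<le> kill_rate \<xi> i s"
  unfolding kill_rate_def using lam_pos c0_pos by simp

lemma bounded_borel_on_kill_rate: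
  assumes y: "continuous_while_alive T N \<sigma> y" and "i < N"
  shows "bounded_borel_on {0..T} (kill_rate (killed_paths \<sigma> y) i)"
  unfolding kill_rate_killed_paths[abs_def]
proof (rule bounded_borel_on_if_ereal_less[where B = "lam * c0"])
  have yi: "continuous_on {r. 0 \<le> r \<and> r \<le> T \<and> ereal r < \<sigma> i} (y i)"
    using y \<open>i < N\<close> by (auto simp: continuous_while_alive_def)
  have "continuous_on {r. 0 \<le> r \<and> r \<le> T \<and> ereal r < \<sigma> i} (\<lambda>s. intuN N K (killed_paths \<sigma> y) s (y i s))"
    by (rule continuous_on_compose2[OF K.continuous_on_intuN[OF y], of _ "\<lambda>s. (s, y i s)", simplified])
       (auto intro!: continuous_intros yi)
  then show "continuous_on {r. 0 \<le> r \<and> r \<le> T \<and> ereal r < \<sigma> i}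
      (\<lambda>s. lam * c0 * exp (- lam * intuN N K (killed_paths \<sigma> y) s (y i s)))"
    by (intro continuous_intros)
  fix r assume "r \<in> {0..T}"
  then have "exp (- lam * intuN N K (killed_paths \<sigma> y) r (y i r)) \<le> 1"
    using intuN_K_range lam_pos by simp
  then show "\<bar>if ereal r < \<sigma> i then lam * c0 * exp (- lam * intuN N K (killed_paths \<sigma> y) r (y i r)) else lam * c0\<bar>
      \<le> lam * c0"
    using lam_pos c0_pos by (auto simp: abs_mult intro: mult_left_le)
qed simp

lemma continuous_on_kill_clock:
  "continuous_while_alive T N \<sigma> y \<Longrightarrow> i < N \<Longrightarrow> continuous_on {0..T} (kill_clock (killed_paths \<sigma> y) i)"
  unfolding kill_clock_def by (intro continuous_on_set_integral_Icc bounded_borel_on_kill_rate)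

lemma kill_clock_mono:
  assumes "continuous_while_alive T N \<sigma> y" "i < N" "0 \<le> c" "c \<le> c'" "c' \<le> T"
  shows "kill_clock (killed_paths \<sigma> y) i c \<le> kill_clock (killed_paths \<sigma> y) i c'"
proof -
  have "kill_clock (killed_paths \<sigma> y) i c'
      = kill_clock (killed_paths \<sigma> y) i c + set_lebesgue_integral lborel {c..c'} (kill_rate (killed_paths \<sigma> y) i)"
    unfolding kill_clock_def using assms
    by (intro set_integral_Icc_combine[OF bounded_borel_on_kill_rate]) auto
  moreover have "0 \<le> set_lebesgue_integral lborel {c..c'} (kill_rate (killed_paths \<sigma> y) i)"
    by (intro set_integral_Icc_nonneg kill_rate_nonneg)
  ultimately show ?thesis
    by simp
qed

lemma kill_time_attained:
  assumes y: "continuous_while_alive T N \<sigma> y" and i: "i < N"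
  obtains "kill_time T N K lam c0 z (killed_paths \<sigma> y) i = \<infinity>"
  | c where "0 \<le> c" "c \<le> T" "z \<le> kill_clock (killed_paths \<sigma> y) i c"
    "kill_time T N K lam c0 z (killed_paths \<sigma> y) i = ereal c"
proof (cases "{c. 0 \<le> c \<and> c \<le> T \<and> z \<le> kill_clock (killed_paths \<sigma> y) i c} = {}")
  case True
  show ?thesis
    using that(1) unfolding kill_time_eq_Inf True by (simp add: top_ereal_def)
next
  case False
  let ?S = "{c. 0 \<le> c \<and> c \<le> T \<and> z \<le> kill_clock (killed_paths \<sigma> y) i c}"
  have "closed {c \<in> {0..T}. z \<le> kill_clock (killed_paths \<sigma> y) i c}"
    by (rule continuous_on_closed_Collect_le[OF continuous_on_const continuous_on_kill_clock[OF y i] closed_atLeastAtMost])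
  moreover have "{c \<in> {0..T}. z \<le> kill_clock (killed_paths \<sigma> y) i c} = ?S"
    by auto
  moreover have bdd: "bdd_below ?S"
    by (auto intro: bdd_belowI[of _ 0])
  ultimately have inS: "Inf ?S \<in> ?S"
    using False by (metis closed_contains_Inf)
  have "Inf (ereal ` ?S) = ereal (Inf ?S)"
  proof (rule antisym)
    show "Inf (ereal ` ?S) \<le> ereal (Inf ?S)"
      using inS by (rule INF_lower)
    show "ereal (Inf ?S) \<le> Inf (ereal ` ?S)"
      using bdd by (auto intro!: INF_greatest cInf_lower)
  qed
  then show ?thesis
    using inS that(2)[of "Inf ?S"] by (simp add: kill_time_eq_Inf)
qed

lemma kill_time_le_iff:
  assumes y: "continuous_while_alive T N \<sigma> y" and i: "i < N" and c: "0 \<le> c" "c \<le> T"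
  shows "kill_time T N K lam c0 z (killed_paths \<sigma> y) i \<le> ereal c \<longleftrightarrow> z \<le> kill_clock (killed_paths \<sigma> y) i c"
proof
  assume "z \<le> kill_clock (killed_paths \<sigma> y) i c"
  then show "kill_time T N K lam c0 z (killed_paths \<sigma> y) i \<le> ereal c"
    using c unfolding kill_time_eq_Inf by (auto intro: Inf_lower)
next
  assume le: "kill_time T N K lam c0 z (killed_paths \<sigma> y) i \<le> ereal c"
  show "z \<le> kill_clock (killed_paths \<sigma> y) i c"
  proof (cases rule: kill_time_attained[OF y i, of z])
    case (2 c')
    then show ?thesis
      using kill_clock_mono[OF y i, of c' c] le c by simp
  qed (use le in simp)
qed

lemma kill_time_nonneg:
  "continuous_while_alive T N \<sigma> y \<Longrightarrow> i < N \<Longrightarrow> 0 \<le> kill_time T N K lam c0 z (killed_paths \<sigma> y) i"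
  by (cases rule: kill_time_attained[of _ _ _ z]) auto

lemma kill_time_cong:
  assumes "\<And>j r. j < N \<Longrightarrow> r \<in> {0..T} \<Longrightarrow> \<xi> j r = \<xi>' j r" "i < N"
  shows "kill_time T N K lam c0 z \<xi> i = kill_time T N K lam c0 z \<xi>' i"
proof -
  have "kill_rate \<xi> i s = kill_rate \<xi>' i s" if "s \<in> {0..T}" for s
    using assms that intuN_cong[of N s \<xi> \<xi>'] unfolding kill_rate_def by auto
  then have "kill_clock \<xi> i c = kill_clock \<xi>' i c" if "c \<le> T" for c
    unfolding kill_clock_def using that by (intro set_lebesgue_integral_cong) auto
  then show ?thesis
    unfolding kill_time_eq_Inf by (metis (mono_tags, lifting))
qed

lemma kill_time_causal:
  assumes y: "continuous_while_alive T N \<sigma> y" and y': "continuous_while_alive T N \<sigma>' y'"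
    and i: "i < N" and t: "0 \<le> t" "t \<le> T"
    and eq: "\<And>j r. j < N \<Longrightarrow> 0 \<le> r \<Longrightarrow> r < t \<Longrightarrow> killed_paths \<sigma> y j r = killed_paths \<sigma>' y' j r"
    and le: "kill_time T N K lam c0 z (killed_paths \<sigma> y) i \<le> ereal t"
  shows "kill_time T N K lam c0 z (killed_paths \<sigma>' y') i = kill_time T N K lam c0 z (killed_paths \<sigma> y) i"
proof -
  have rate: "kill_rate (killed_paths \<sigma> y) i s = kill_rate (killed_paths \<sigma>' y') i s" if "0 \<le> s" "s < t" for s
  proof -
    have "intuN N K (killed_paths \<sigma> y) s = intuN N K (killed_paths \<sigma>' y') s"
      using that eq by (intro intuN_cong) auto
    then show ?thesis
      using eq[OF i that] by (simp add: kill_rate_def)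
  qed
  have clock: "kill_clock (killed_paths \<sigma> y) i c = kill_clock (killed_paths \<sigma>' y') i c" if "0 \<le> c" "c \<le> t" for c
    unfolding kill_clock_def using that t rate
    by (intro set_integral_Icc_cong_before[OF bounded_borel_on_kill_rate[OF y i]
        bounded_borel_on_kill_rate[OF y' i]])
       auto
  have le_iff: "kill_time T N K lam c0 z (killed_paths \<sigma> y) i \<le> ereal c
      \<longleftrightarrow> kill_time T N K lam c0 z (killed_paths \<sigma>' y') i \<le> ereal c" if "0 \<le> c" "c \<le> t" for c
    using that t by (simp add: kill_time_le_iff[OF y i] kill_time_le_iff[OF y' i] clock)
  obtain c where c: "0 \<le> c" "c \<le> t" "kill_time T N K lam c0 z (killed_paths \<sigma> y) i = ereal c"
    using le by (cases rule: kill_time_attained[OF y i, of z]) auto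
  then obtain c' where c': "0 \<le> c'" "c' \<le> c" "kill_time T N K lam c0 z (killed_paths \<sigma>' y') i = ereal c'"
    using le_iff[OF c(1,2)] by (cases rule: kill_time_attained[OF y' i, of z]) auto
  then show ?thesis
    using le_iff[of c'] c by auto
qed

end

section \<open>Construction of the killed system\<close>

context killed_system
begin

text \<open>During the iteration below, \<open>\<sigma> j = \<infinity>\<close> marks a particle whose kill time is not determined
  yet; in the final pattern it marks a particle that survives up to time \<open>T\<close>.\<close>

definition next_kill :: "(nat \<Rightarrow> real) \<Rightarrow> (nat \<Rightarrow> real \<Rightarrow> real) \<Rightarrow> (nat \<Rightarrow> real) \<Rightarrow> (nat \<Rightarrow> ereal) \<Rightarrow> nat \<Rightarrow> ereal" where
  "next_kill x\<^sub>0 w z \<sigma> j = kill_time T N K lam c0 (z j) (killed_paths \<sigma> (paths_for_kills x\<^sub>0 w \<sigma>)) j"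

definition first_new_kill :: "(nat \<Rightarrow> real) \<Rightarrow> (nat \<Rightarrow> real \<Rightarrow> real) \<Rightarrow> (nat \<Rightarrow> real) \<Rightarrow> (nat \<Rightarrow> ereal) \<Rightarrow> ereal" where
  "first_new_kill x\<^sub>0 w z \<sigma> = (INF j\<in>{..<N}. if \<sigma> j = \<infinity> then next_kill x\<^sub>0 w z \<sigma> j else \<infinity>)"

definition kill_step :: "(nat \<Rightarrow> real) \<Rightarrow> (nat \<Rightarrow> real \<Rightarrow> real) \<Rightarrow> (nat \<Rightarrow> real) \<Rightarrow> (nat \<Rightarrow> ereal) \<Rightarrow> nat \<Rightarrow> ereal" where
  "kill_step x\<^sub>0 w z \<sigma> j =
    (if j < N \<and> \<sigma> j = \<infinity> \<and> next_kill x\<^sub>0 w z \<sigma> j = first_new_kill x\<^sub>0 w z \<sigma> then first_new_kill x\<^sub>0 w z \<sigma> else \<sigma> j)"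

definition kill_iter :: "(nat \<Rightarrow> real) \<Rightarrow> (nat \<Rightarrow> real \<Rightarrow> real) \<Rightarrow> (nat \<Rightarrow> real) \<Rightarrow> nat \<Rightarrow> nat \<Rightarrow> ereal" where
  "kill_iter x\<^sub>0 w z n = (kill_step x\<^sub>0 w z ^^ n) (\<lambda>_. \<infinity>)"

definition consistent_kills :: "(nat \<Rightarrow> real) \<Rightarrow> (nat \<Rightarrow> real \<Rightarrow> real) \<Rightarrow> (nat \<Rightarrow> real) \<Rightarrow> (nat \<Rightarrow> ereal) \<Rightarrow> bool" where
  "consistent_kills x\<^sub>0 w z \<sigma> \<longleftrightarrow> (\<forall>j<N. \<sigma> j \<noteq> \<infinity> \<longrightarrow> next_kill x\<^sub>0 w z \<sigma> j = \<sigma> j) \<and>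
     (\<forall>j<N. \<forall>k<N. \<sigma> j \<noteq> \<infinity> \<longrightarrow> \<sigma> k = \<infinity> \<longrightarrow> \<sigma> j \<le> next_kill x\<^sub>0 w z \<sigma> k)"

definition killed_solution :: "(nat \<Rightarrow> real) \<Rightarrow> (nat \<Rightarrow> real \<Rightarrow> real) \<Rightarrow> (nat \<Rightarrow> real) \<Rightarrow> nat \<Rightarrow> real \<Rightarrow> real option" where
  "killed_solution x\<^sub>0 w z = killed_paths (kill_iter x\<^sub>0 w z N) (paths_for_kills x\<^sub>0 w (kill_iter x\<^sub>0 w z N))"

lemma first_new_kill_le: "j < N \<Longrightarrow> \<sigma> j = \<infinity> \<Longrightarrow> first_new_kill x\<^sub>0 w z \<sigma> \<le> next_kill x\<^sub>0 w z \<sigma> j"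
  unfolding first_new_kill_def by (rule INF_lower2[of j]) auto

lemma first_new_kill_attained:
  assumes "first_new_kill x\<^sub>0 w z \<sigma> \<noteq> \<infinity>"
  obtains j where "j < N" "\<sigma> j = \<infinity>" "next_kill x\<^sub>0 w z \<sigma> j = first_new_kill x\<^sub>0 w z \<sigma>"
proof -
  let ?f = "\<lambda>j. if \<sigma> j = \<infinity> then next_kill x\<^sub>0 w z \<sigma> j else \<infinity>"
  have "{..<N} \<noteq> {}"
    using assms unfolding first_new_kill_def by (auto simp: top_ereal_def)
  then have "Inf (?f ` {..<N}) \<in> ?f ` {..<N}"
    using Min_in[of "?f ` {..<N}"] Min_Inf[of "?f ` {..<N}"] by auto
  then show ?thesis
    using assms that unfolding first_new_kill_def by (auto split: if_splits)
qed

lemma first_new_kill_eq_infinity: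
  assumes "\<forall>j<N. \<sigma> j \<noteq> \<infinity>"
  shows "first_new_kill x\<^sub>0 w z \<sigma> = \<infinity>"
proof -
  have "\<infinity> \<le> first_new_kill x\<^sub>0 w z \<sigma>"
    unfolding first_new_kill_def using assms by (intro INF_greatest) auto
  then show ?thesis
    by simp
qed

lemma kill_step_id: "first_new_kill x\<^sub>0 w z \<sigma> = \<infinity> \<Longrightarrow> kill_step x\<^sub>0 w z \<sigma> = \<sigma>"
  unfolding kill_step_def by auto

context
  fixes x\<^sub>0 :: "nat \<Rightarrow> real" and w :: "nat \<Rightarrow> real \<Rightarrow> real" and z :: "nat \<Rightarrow> real"
  assumes w: "\<And>i. i < N \<Longrightarrow> continuous_on {0..T} (w i)"
begin

lemma continuous_while_alive_paths_for_kills: "continuous_while_alive T N \<sigma> (paths_for_kills x\<^sub>0 w \<sigma>)"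
  using continuous_on_paths_for_kills[where w = w, OF w] by (rule continuous_while_aliveI)

lemma paths_for_kills_causal:
  assumes t: "t \<le> T"
    and alive_iff: "\<And>j r. j < N \<Longrightarrow> 0 \<le> r \<Longrightarrow> r < t \<Longrightarrow> ereal r < \<sigma> j \<longleftrightarrow> ereal r < \<sigma>' j"
    and "j < N" "0 \<le> r" "r < t"
  shows "paths_for_kills x\<^sub>0 w \<sigma> j r = paths_for_kills x\<^sub>0 w \<sigma>' j r"
proof (rule alive_paths_unique[where \<rho> = "\<lambda>_. \<infinity>" and \<sigma> = \<sigma> and t' = r
      and y = "paths_for_kills x\<^sub>0 w \<sigma>" and y' = "paths_for_kills x\<^sub>0 w \<sigma>'"])
  have "continuous_while_alive r N (\<lambda>_. \<infinity>) (paths_for_kills x\<^sub>0 w s)" for s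
    using \<open>r < t\<close> t
    by (intro continuous_while_aliveI continuous_on_subset[OF continuous_on_paths_for_kills[where w = w, OF w]]) auto
  then show "continuous_while_alive r N (\<lambda>_. \<infinity>) (paths_for_kills x\<^sub>0 w \<sigma>)"
    "continuous_while_alive r N (\<lambda>_. \<infinity>) (paths_for_kills x\<^sub>0 w \<sigma>')" by this+
  fix i t' assume i: "i < N" and t': "t' \<in> {0..r}"
  show "paths_for_kills x\<^sub>0 w \<sigma> i t' = x\<^sub>0 i + drift_integral \<sigma> (paths_for_kills x\<^sub>0 w \<sigma>) i t' + sqrt 2 * w i t'"
    using t' \<open>r < t\<close> t by (intro paths_for_kills_eq[where w = w, OF w i]) auto
  have "drift_integral \<sigma>' (paths_for_kills x\<^sub>0 w \<sigma>') i t' = drift_integral \<sigma> (paths_for_kills x\<^sub>0 w \<sigma>') i t'"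
    using alive_iff t' \<open>r < t\<close> by (intro drift_integral_cong killed_paths_cong) auto
  then show "paths_for_kills x\<^sub>0 w \<sigma>' i t'
      = x\<^sub>0 i + drift_integral \<sigma> (paths_for_kills x\<^sub>0 w \<sigma>') i t' + sqrt 2 * w i t'"
    using paths_for_kills_eq[where w = w and \<sigma> = \<sigma>' and t = t', OF w i] t' \<open>r < t\<close> t by auto
qed (use assms in auto)

lemma next_kill_causal:
  assumes t: "0 \<le> t" "t \<le> T"
    and alive_iff: "\<And>j r. j < N \<Longrightarrow> 0 \<le> r \<Longrightarrow> r < t \<Longrightarrow> ereal r < \<sigma> j \<longleftrightarrow> ereal r < \<sigma>' j"
    and "i < N" and le: "next_kill x\<^sub>0 w z \<sigma> i \<le> ereal t"
  shows "next_kill x\<^sub>0 w z \<sigma>' i = next_kill x\<^sub>0 w z \<sigma> i"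
  unfolding next_kill_def
proof (rule kill_time_causal[OF continuous_while_alive_paths_for_kills continuous_while_alive_paths_for_kills
      \<open>i < N\<close> t])
  show "killed_paths \<sigma> (paths_for_kills x\<^sub>0 w \<sigma>) j r = killed_paths \<sigma>' (paths_for_kills x\<^sub>0 w \<sigma>') j r"
    if "j < N" "0 \<le> r" "r < t" for j r
    using that alive_iff paths_for_kills_causal[OF t(2) alive_iff] by (intro killed_paths_cong) auto
qed (use le in \<open>simp add: next_kill_def\<close>)

lemma next_kill_cases:
  "j < N \<Longrightarrow> next_kill x\<^sub>0 w z \<sigma> j = \<infinity> \<or> (\<exists>c. 0 \<le> c \<and> c \<le> T \<and> next_kill x\<^sub>0 w z \<sigma> j = ereal c)"
  unfolding next_kill_def by (cases rule: kill_time_attained[OF continuous_while_alive_paths_for_kills]) auto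

lemma next_kill_le_iff:
  assumes "j < N" "0 \<le> r"
  shows "next_kill x\<^sub>0 w z \<sigma> j \<le> ereal r
    \<longleftrightarrow> z j \<le> kill_clock (killed_paths \<sigma> (paths_for_kills x\<^sub>0 w \<sigma>)) j (min r T)"
proof -
  have "next_kill x\<^sub>0 w z \<sigma> j \<le> ereal r \<longleftrightarrow> next_kill x\<^sub>0 w z \<sigma> j \<le> ereal (min r T)"
    using next_kill_cases[OF assms(1), of \<sigma>] by auto
  also have "\<dots> \<longleftrightarrow> z j \<le> kill_clock (killed_paths \<sigma> (paths_for_kills x\<^sub>0 w \<sigma>)) j (min r T)"
    unfolding next_kill_def using assms T_pos
    by (intro kill_time_le_iff continuous_while_alive_paths_for_kills) auto
  finally show ?thesis .
qed

end


lemma kill_step_cases: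
  "kill_step x\<^sub>0 w z \<sigma> j = \<sigma> j \<or> (j < N \<and> \<sigma> j = \<infinity> \<and> kill_step x\<^sub>0 w z \<sigma> j = first_new_kill x\<^sub>0 w z \<sigma>
     \<and> next_kill x\<^sub>0 w z \<sigma> j = first_new_kill x\<^sub>0 w z \<sigma>)"
  unfolding kill_step_def by auto

context
  fixes x\<^sub>0 :: "nat \<Rightarrow> real" and w :: "nat \<Rightarrow> real \<Rightarrow> real" and z :: "nat \<Rightarrow> real" and \<sigma> :: "nat \<Rightarrow> ereal"
  assumes w: "\<And>i. i < N \<Longrightarrow> continuous_on {0..T} (w i)"
    and consistent: "consistent_kills x\<^sub>0 w z \<sigma>" and new: "first_new_kill x\<^sub>0 w z \<sigma> \<noteq> \<infinity>"
begin

lemma first_new_kill_real: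
  obtains j t where "j < N" "\<sigma> j = \<infinity>" "next_kill x\<^sub>0 w z \<sigma> j = ereal t"
    "first_new_kill x\<^sub>0 w z \<sigma> = ereal t" "0 \<le> t" "t \<le> T"
proof -
  obtain j where j: "j < N" "\<sigma> j = \<infinity>" "next_kill x\<^sub>0 w z \<sigma> j = first_new_kill x\<^sub>0 w z \<sigma>"
    using new by (rule first_new_kill_attained)
  then show ?thesis
    using next_kill_cases[where x\<^sub>0 = x\<^sub>0 and w = w and z = z and \<sigma> = \<sigma>, OF w j(1)] new that by auto
qed

lemma killed_before_first_new_kill:
  assumes "j < N" "\<sigma> j \<noteq> \<infinity>"
  shows "\<sigma> j \<le> first_new_kill x\<^sub>0 w z \<sigma>"
proof -
  obtain j0 where j0: "j0 < N" "\<sigma> j0 = \<infinity>" "next_kill x\<^sub>0 w z \<sigma> j0 = first_new_kill x\<^sub>0 w z \<sigma>"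
    using new by (rule first_new_kill_attained)
  then have "\<sigma> j \<le> next_kill x\<^sub>0 w z \<sigma> j0"
    using consistent assms unfolding consistent_kills_def by blast
  with j0 show ?thesis
    by simp
qed

text \<open>Before the first new kill, \<open>\<sigma>\<close> and \<open>kill_step x\<^sub>0 w z \<sigma>\<close> describe the same alive particles,
  so by causality every kill time not after it is the same for both patterns.\<close>

lemma next_kill_kill_step:
  assumes "i < N"
    and before: "next_kill x\<^sub>0 w z \<sigma> i \<le> first_new_kill x\<^sub>0 w z \<sigma>
      \<or> next_kill x\<^sub>0 w z (kill_step x\<^sub>0 w z \<sigma>) i \<le> first_new_kill x\<^sub>0 w z \<sigma>"
  shows "next_kill x\<^sub>0 w z (kill_step x\<^sub>0 w z \<sigma>) i = next_kill x\<^sub>0 w z \<sigma> i"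
proof -
  obtain t where t: "first_new_kill x\<^sub>0 w z \<sigma> = ereal t" "0 \<le> t" "t \<le> T"
    using first_new_kill_real by metis
  have alive_iff: "ereal r < \<sigma> j \<longleftrightarrow> ereal r < kill_step x\<^sub>0 w z \<sigma> j" if "r < t" for j r
    using kill_step_cases[of x\<^sub>0 w z \<sigma> j] that t by auto
  from before show ?thesis
  proof
    assume "next_kill x\<^sub>0 w z \<sigma> i \<le> first_new_kill x\<^sub>0 w z \<sigma>"
    then show ?thesis
      using alive_iff t \<open>i < N\<close> by (intro next_kill_causal[OF w t(2,3)]) auto
  next
    assume "next_kill x\<^sub>0 w z (kill_step x\<^sub>0 w z \<sigma>) i \<le> first_new_kill x\<^sub>0 w z \<sigma>"
    then show ?thesis
      using alive_iff t \<open>i < N\<close> by (intro next_kill_causal[OF w t(2,3), symmetric]) auto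
  qed
qed

lemma consistent_kill_step: "consistent_kills x\<^sub>0 w z (kill_step x\<^sub>0 w z \<sigma>)"
  unfolding consistent_kills_def
proof (intro conjI allI impI)
  fix j assume j: "j < N" "kill_step x\<^sub>0 w z \<sigma> j \<noteq> \<infinity>"
  show "next_kill x\<^sub>0 w z (kill_step x\<^sub>0 w z \<sigma>) j = kill_step x\<^sub>0 w z \<sigma> j"
  proof (cases "\<sigma> j = \<infinity>")
    case True
    then have "next_kill x\<^sub>0 w z \<sigma> j = first_new_kill x\<^sub>0 w z \<sigma>" "kill_step x\<^sub>0 w z \<sigma> j = first_new_kill x\<^sub>0 w z \<sigma>"
      using kill_step_cases[of x\<^sub>0 w z \<sigma> j] j by auto
    then show ?thesis
      using next_kill_kill_step[OF j(1)] by simp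
  next
    case False
    then have "next_kill x\<^sub>0 w z \<sigma> j = \<sigma> j" "kill_step x\<^sub>0 w z \<sigma> j = \<sigma> j"
      using consistent j unfolding consistent_kills_def kill_step_def by auto
    then show ?thesis
      using next_kill_kill_step[OF j(1)] killed_before_first_new_kill[OF j(1) False] by simp
  qed
next
  fix j k assume jk: "j < N" "k < N" "kill_step x\<^sub>0 w z \<sigma> j \<noteq> \<infinity>" "kill_step x\<^sub>0 w z \<sigma> k = \<infinity>"
  then have k: "\<sigma> k = \<infinity>" "next_kill x\<^sub>0 w z \<sigma> k \<noteq> first_new_kill x\<^sub>0 w z \<sigma>"
    using new unfolding kill_step_def by (auto split: if_splits)
  then have "first_new_kill x\<^sub>0 w z \<sigma> < next_kill x\<^sub>0 w z \<sigma> k"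
    using first_new_kill_le[where \<sigma> = \<sigma> and x\<^sub>0 = x\<^sub>0 and w = w and z = z, OF jk(2) k(1)] by simp
  then have "first_new_kill x\<^sub>0 w z \<sigma> < next_kill x\<^sub>0 w z (kill_step x\<^sub>0 w z \<sigma>) k"
    using next_kill_kill_step[OF jk(2)] by force
  moreover have "kill_step x\<^sub>0 w z \<sigma> j \<le> first_new_kill x\<^sub>0 w z \<sigma>"
    using kill_step_cases[of x\<^sub>0 w z \<sigma> j] killed_before_first_new_kill[OF jk(1)] jk(3) by auto
  ultimately show "kill_step x\<^sub>0 w z \<sigma> j \<le> next_kill x\<^sub>0 w z (kill_step x\<^sub>0 w z \<sigma>) k"
    by simp
qed

lemma card_alive_kill_step_less:
  "card {j. j < N \<and> kill_step x\<^sub>0 w z \<sigma> j = \<infinity>} < card {j. j < N \<and> \<sigma> j = \<infinity>}"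
proof -
  obtain j0 t where j0: "j0 < N" "\<sigma> j0 = \<infinity>" "next_kill x\<^sub>0 w z \<sigma> j0 = ereal t" "first_new_kill x\<^sub>0 w z \<sigma> = ereal t"
    using first_new_kill_real by metis
  have "{j. j < N \<and> kill_step x\<^sub>0 w z \<sigma> j = \<infinity>} \<subseteq> {j. j < N \<and> \<sigma> j = \<infinity>} - {j0}"
    using j0 kill_step_cases[of x\<^sub>0 w z \<sigma>] unfolding kill_step_def by auto
  then have "card {j. j < N \<and> kill_step x\<^sub>0 w z \<sigma> j = \<infinity>} \<le> card ({j. j < N \<and> \<sigma> j = \<infinity>} - {j0})"
    by (intro card_mono) auto
  also have "\<dots> < card {j. j < N \<and> \<sigma> j = \<infinity>}"
    using j0 by (intro card_Diff1_less) auto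
  finally show ?thesis .
qed

end

lemma kill_iter_Suc: "kill_iter x\<^sub>0 w z (Suc n) = kill_step x\<^sub>0 w z (kill_iter x\<^sub>0 w z n)"
  by (simp add: kill_iter_def)

context
  fixes x\<^sub>0 :: "nat \<Rightarrow> real" and w :: "nat \<Rightarrow> real \<Rightarrow> real" and z :: "nat \<Rightarrow> real"
  assumes w: "\<And>i. i < N \<Longrightarrow> continuous_on {0..T} (w i)"
begin

text \<open>Each step fixes at least one more kill time, so after \<open>N\<close> steps no new kill is left.\<close>

lemma consistent_kill_iter: "consistent_kills x\<^sub>0 w z (kill_iter x\<^sub>0 w z n) \<and>
    (first_new_kill x\<^sub>0 w z (kill_iter x\<^sub>0 w z n) = \<infinity> \<or> card {j. j < N \<and> kill_iter x\<^sub>0 w z n j = \<infinity>} + n \<le> N)"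
proof (induction n)
  case 0
  have "card {j. j < N} \<le> N"
    by (metis card_lessThan lessThan_def order_refl)
  then show ?case
    by (simp add: kill_iter_def consistent_kills_def)
next
  case (Suc n)
  show ?case
  proof (cases "first_new_kill x\<^sub>0 w z (kill_iter x\<^sub>0 w z n) = \<infinity>")
    case True
    then show ?thesis
      using Suc.IH by (simp add: kill_iter_Suc kill_step_id)
  next
    case False
    then show ?thesis
      using Suc.IH consistent_kill_step[OF w _ False] card_alive_kill_step_less[OF w _ False]
      by (auto simp: kill_iter_Suc)
  qed
qed

lemma next_kill_kill_iter: "j < N \<Longrightarrow> next_kill x\<^sub>0 w z (kill_iter x\<^sub>0 w z N) j = kill_iter x\<^sub>0 w z N j"
proof -
  assume j: "j < N"
  let ?\<sigma> = "kill_iter x\<^sub>0 w z N"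
  have none_new: "first_new_kill x\<^sub>0 w z ?\<sigma> = \<infinity>"
  proof -
    have "first_new_kill x\<^sub>0 w z ?\<sigma> = \<infinity> \<or> {j. j < N \<and> ?\<sigma> j = \<infinity>} = {}"
      using consistent_kill_iter[of N] by (auto simp: card_eq_0_iff)
    then show ?thesis
      using first_new_kill_eq_infinity by blast
  qed
  show ?thesis
  proof (cases "?\<sigma> j = \<infinity>")
    case True
    then show ?thesis
      using first_new_kill_le[where \<sigma> = ?\<sigma> and x\<^sub>0 = x\<^sub>0 and w = w and z = z, OF j True] none_new by simp
  next
    case False
    then show ?thesis
      using consistent_kill_iter[of N] j unfolding consistent_kills_def by blast
  qed
qed

theorem killed_solution_is_solution:
  "is_killed_solution T N K dK lam c0 phi0 phi1 x\<^sub>0 w z (killed_solution x\<^sub>0 w z)"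
  unfolding is_killed_solution_def
proof (intro allI impI conjI)
  let ?\<sigma> = "kill_iter x\<^sub>0 w z N" and ?y = "paths_for_kills x\<^sub>0 w (kill_iter x\<^sub>0 w z N)"
  fix i assume i: "i < N"
  have kill_time: "kill_time T N K lam c0 (z i) (killed_solution x\<^sub>0 w z) i = ?\<sigma> i"
    using next_kill_kill_iter[OF i] unfolding next_kill_def killed_solution_def .
  have "continuous_on {t. 0 \<le> t \<and> t \<le> T \<and> ereal t < ?\<sigma> i} (?y i)"
    using continuous_on_paths_for_kills[where w = w, OF w i] by (rule continuous_on_subset) auto
  then show "continuous_on {t. 0 \<le> t \<and> t \<le> T \<and> ereal t < kill_time T N K lam c0 (z i) (killed_solution x\<^sub>0 w z) i}
      (\<lambda>t. the (killed_solution x\<^sub>0 w z i t))"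
    unfolding kill_time by (rule continuous_on_eq) (auto simp: killed_solution_def killed_paths_def)
  fix t assume t: "0 \<le> t \<and> t \<le> T"
  show "kill_time T N K lam c0 (z i) (killed_solution x\<^sub>0 w z) i \<le> ereal t \<Longrightarrow> killed_solution x\<^sub>0 w z i t = None"
    unfolding kill_time by (simp add: killed_solution_def killed_paths_def)
  assume "ereal t < kill_time T N K lam c0 (z i) (killed_solution x\<^sub>0 w z) i"
  then have alive: "ereal s < ?\<sigma> i" if "s \<le> t" for s
    using that kill_time by (auto intro: le_less_trans[of _ "ereal t"])
  have "drift_integral ?\<sigma> ?y i t = set_lebesgue_integral lborel {0..t} (\<lambda>s. drift
      (intuN N K (killed_solution x\<^sub>0 w z) s (the (killed_solution x\<^sub>0 w z i s)))
      (gradUN N dK (killed_solution x\<^sub>0 w z) s (the (killed_solution x\<^sub>0 w z i s))))"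
    unfolding drift_integral_def drift_at_def killed_solution_def
    using alive by (intro set_lebesgue_integral_cong) (auto simp: killed_paths_def)
  then show "killed_solution x\<^sub>0 w z i t = Some (x\<^sub>0 i + set_lebesgue_integral lborel {0..t} (\<lambda>s. drift
      (intuN N K (killed_solution x\<^sub>0 w z) s (the (killed_solution x\<^sub>0 w z i s)))
      (gradUN N dK (killed_solution x\<^sub>0 w z) s (the (killed_solution x\<^sub>0 w z i s)))) + sqrt 2 * w i t)"
    using paths_for_kills_eq[where w = w and t = t, OF w i] alive t
    by (simp add: killed_solution_def killed_paths_def)
qed

end

end

section \<open>Pathwise uniqueness\<close>

lemma first_discrepancy:
  fixes \<tau> \<tau>' :: "'a \<Rightarrow> ereal"
  assumes "finite I" "j \<in> I" "\<tau> j \<noteq> \<tau>' j" "min (\<tau> j) (\<tau>' j) \<le> ereal t"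
    and nonneg: "\<And>j. j \<in> I \<Longrightarrow> 0 \<le> min (\<tau> j) (\<tau>' j)"
  obtains j0 s where "j0 \<in> I" "\<tau> j0 \<noteq> \<tau>' j0" "min (\<tau> j0) (\<tau>' j0) = ereal s" "0 \<le> s" "s \<le> t"
    "\<And>j r. j \<in> I \<Longrightarrow> r < s \<Longrightarrow> ereal r < \<tau> j \<longleftrightarrow> ereal r < \<tau>' j"
proof -
  define D where "D = {j \<in> I. \<tau> j \<noteq> \<tau>' j \<and> min (\<tau> j) (\<tau>' j) \<le> ereal t}"
  have "finite D" "D \<noteq> {}"
    using assms unfolding D_def by auto
  then obtain j0 where "is_arg_min (\<lambda>j. min (\<tau> j) (\<tau>' j)) (\<lambda>j. j \<in> D) j0"
    using ex_is_arg_min_if_finite by blast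
  then have j0: "j0 \<in> D" and least: "\<And>j. j \<in> D \<Longrightarrow> min (\<tau> j0) (\<tau>' j0) \<le> min (\<tau> j) (\<tau>' j)"
    unfolding is_arg_min_linorder by auto
  then obtain s where s: "min (\<tau> j0) (\<tau>' j0) = ereal s" "0 \<le> s" "s \<le> t"
    using nonneg[of j0] unfolding D_def by (cases "min (\<tau> j0) (\<tau>' j0)") auto
  have "ereal r < \<tau> j \<longleftrightarrow> ereal r < \<tau>' j" if "j \<in> I" "r < s" for j r
  proof (cases "\<tau> j = \<tau>' j")
    case False
    then have "ereal s \<le> min (\<tau> j) (\<tau>' j)"
      using least[of j] s that False unfolding D_def
      by (cases "min (\<tau> j) (\<tau>' j) \<le> ereal t") (auto simp: not_le intro: order_trans[of _ "ereal t"])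
    then show ?thesis
      using that by (auto intro: less_le_trans[of _ "ereal s"])
  qed simp
  with j0 s that show ?thesis
    unfolding D_def by blast
qed

context killed_system
begin

definition kill_times :: "(nat \<Rightarrow> real) \<Rightarrow> (nat \<Rightarrow> real \<Rightarrow> real option) \<Rightarrow> nat \<Rightarrow> ereal" where
  "kill_times z \<xi> j = kill_time T N K lam c0 (z j) \<xi> j"

definition positions :: "(nat \<Rightarrow> real \<Rightarrow> real option) \<Rightarrow> nat \<Rightarrow> real \<Rightarrow> real" where
  "positions \<xi> j r = the (\<xi> j r)"

context
  fixes x\<^sub>0 w z \<xi>
  assumes sol: "is_killed_solution T N K dK lam c0 phi0 phi1 x\<^sub>0 w z \<xi>"
begin

lemma killed_paths_kill_times:
  assumes "j < N" "r \<in> {0..T}"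
  shows "\<xi> j r = killed_paths (kill_times z \<xi>) (positions \<xi>) j r"
proof (cases "ereal r < kill_times z \<xi> j")
  case True
  then have "\<xi> j r \<noteq> None"
    using sol[unfolded is_killed_solution_def, rule_format, OF assms(1)] assms(2) by (auto simp: kill_times_def)
  then show ?thesis
    using True by (auto simp: killed_paths_def positions_def)
next
  case False
  then have "\<xi> j r = None"
    using sol[unfolded is_killed_solution_def, rule_format, OF assms(1)] assms(2)
    by (auto simp: kill_times_def not_less)
  then show ?thesis
    using False by (simp add: killed_paths_def)
qed

lemma continuous_while_alive_positions: "continuous_while_alive T N (kill_times z \<xi>) (positions \<xi>)"
  unfolding continuous_while_alive_def
proof (intro allI impI)
  fix j assume "j < N"
  then show "continuous_on {r. 0 \<le> r \<and> r \<le> T \<and> ereal r < kill_times z \<xi> j} (positions \<xi> j)"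
    using sol[unfolded is_killed_solution_def, rule_format, of j]
    by (simp add: kill_times_def positions_def[abs_def])
qed

lemma kill_time_killed_paths_kill_times:
  assumes "i < N"
  shows "kill_time T N K lam c0 (z i) (killed_paths (kill_times z \<xi>) (positions \<xi>)) i = kill_times z \<xi> i"
  using kill_time_cong[where z = "z i", OF killed_paths_kill_times assms] by (simp add: kill_times_def)

lemma kill_times_nonneg: "j < N \<Longrightarrow> 0 \<le> kill_times z \<xi> j"
  using kill_time_nonneg[OF continuous_while_alive_positions, of j "z j"]
  by (simp add: kill_time_killed_paths_kill_times)

lemma positions_eq:
  assumes "i < N" "t \<in> {0..T}" "ereal t < kill_times z \<xi> i"
  shows "positions \<xi> i t = x\<^sub>0 i + drift_integral (kill_times z \<xi>) (positions \<xi>) i t + sqrt 2 * w i t"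
proof -
  have drift: "drift (intuN N K \<xi> s (the (\<xi> i s))) (gradUN N dK \<xi> s (the (\<xi> i s)))
      = drift_at (kill_times z \<xi>) (positions \<xi>) i s" if "s \<in> {0..t}" for s
  proof -
    have "intuN N \<kappa> \<xi> s = intuN N \<kappa> (killed_paths (kill_times z \<xi>) (positions \<xi>)) s" for \<kappa>
      using killed_paths_kill_times assms that by (intro intuN_cong) auto
    then show ?thesis
      by (simp add: drift_at_def gradUN_eq_intuN positions_def)
  qed
  have "\<xi> i t = Some (x\<^sub>0 i + set_lebesgue_integral lborel {0..t}
      (\<lambda>s. drift (intuN N K \<xi> s (the (\<xi> i s))) (gradUN N dK \<xi> s (the (\<xi> i s)))) + sqrt 2 * w i t)"
    using sol[unfolded is_killed_solution_def, rule_format, OF assms(1)] assms(2,3) by (auto simp: kill_times_def)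
  also have "set_lebesgue_integral lborel {0..t}
      (\<lambda>s. drift (intuN N K \<xi> s (the (\<xi> i s))) (gradUN N dK \<xi> s (the (\<xi> i s))))
      = drift_integral (kill_times z \<xi>) (positions \<xi>) i t"
    unfolding drift_integral_def by (rule set_lebesgue_integral_cong) (use drift in auto)
  finally show ?thesis
    by (simp add: positions_def)
qed

end

lemma killed_solutions_eq_if_alive_iff:
  assumes sol: "is_killed_solution T N K dK lam c0 phi0 phi1 x\<^sub>0 w z \<xi>"
    and sol': "is_killed_solution T N K dK lam c0 phi0 phi1 x\<^sub>0 w' z \<xi>'"
    and t': "0 \<le> t'" "t' \<le> T" and w: "\<And>i s. i < N \<Longrightarrow> s \<in> {0..t'} \<Longrightarrow> w i s = w' i s"
    and alive_iff: "\<And>j r. j < N \<Longrightarrow> r \<in> {0..t'} \<Longrightarrow> ereal r < kill_times z \<xi> j \<longleftrightarrow> ereal r < kill_times z \<xi>' j"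
    and "j < N" "r \<in> {0..t'}"
  shows "\<xi> j r = \<xi>' j r"
proof -
  let ?\<tau> = "kill_times z \<xi>" and ?\<tau>' = "kill_times z \<xi>'" and ?y = "positions \<xi>" and ?y' = "positions \<xi>'"
  have "?y k s = ?y' k s" if "k < N" "s \<in> {0..t'}" "ereal s < ?\<tau> k" for k s
  proof (rule alive_paths_unique[where \<sigma> = ?\<tau> and \<rho> = ?\<tau> and t' = t' and y = ?y and y' = ?y'])
    show "continuous_while_alive t' N ?\<tau> ?y"
      using t' by (intro continuous_while_alive_mono[OF continuous_while_alive_positions[OF sol]]) auto
    have "continuous_while_alive t' N ?\<tau>' ?y'"
      using t' by (intro continuous_while_alive_mono[OF continuous_while_alive_positions[OF sol']]) auto
    then show "continuous_while_alive t' N ?\<tau> ?y'"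
      using alive_iff unfolding continuous_while_alive_def
      by (metis (no_types, lifting) Collect_cong atLeastAtMost_iff)
    fix i s assume s: "i < N" "s \<in> {0..t'}" "ereal s < ?\<tau> i"
    show "?y i s = x\<^sub>0 i + drift_integral ?\<tau> ?y i s + sqrt 2 * w i s"
      using s t' by (intro positions_eq[OF sol]) auto
    have "drift_integral ?\<tau>' ?y' i s = drift_integral ?\<tau> ?y' i s"
      using s alive_iff by (intro drift_integral_cong killed_paths_cong) auto
    then show "?y' i s = x\<^sub>0 i + drift_integral ?\<tau> ?y' i s + sqrt 2 * w i s"
      using positions_eq[OF sol' s(1), of s] s alive_iff w t' by auto
  qed (use that t' in auto)
  then show ?thesis
    using killed_paths_kill_times[OF sol] killed_paths_kill_times[OF sol'] alive_iff assms(7,8) t'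
    by (auto simp: killed_paths_def)
qed

lemma kill_times_agree:
  assumes sol: "is_killed_solution T N K dK lam c0 phi0 phi1 x\<^sub>0 w z \<xi>"
    and sol': "is_killed_solution T N K dK lam c0 phi0 phi1 x\<^sub>0 w' z \<xi>'"
    and t\<^sub>0: "0 \<le> t\<^sub>0" "t\<^sub>0 \<le> T" and w: "\<And>i s. i < N \<Longrightarrow> s \<in> {0..t\<^sub>0} \<Longrightarrow> w i s = w' i s"
    and "j < N" "min (kill_times z \<xi> j) (kill_times z \<xi>' j) \<le> ereal t\<^sub>0"
  shows "kill_times z \<xi> j = kill_times z \<xi>' j"
proof (rule ccontr)
  let ?\<tau> = "kill_times z \<xi>" and ?\<tau>' = "kill_times z \<xi>'"
  assume "?\<tau> j \<noteq> ?\<tau>' j"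
  then obtain j0 s where j0: "j0 < N" "?\<tau> j0 \<noteq> ?\<tau>' j0" "min (?\<tau> j0) (?\<tau>' j0) = ereal s" "0 \<le> s" "s \<le> t\<^sub>0"
    and alive_iff: "\<And>j r. j < N \<Longrightarrow> r < s \<Longrightarrow> ereal r < ?\<tau> j \<longleftrightarrow> ereal r < ?\<tau>' j"
    using first_discrepancy[of "{..<N}" j ?\<tau> ?\<tau>' t\<^sub>0] assms kill_times_nonneg[OF sol] kill_times_nonneg[OF sol']
    by auto
  have agree: "killed_paths ?\<tau> (positions \<xi>) k r = killed_paths ?\<tau>' (positions \<xi>') k r"
    if "k < N" "0 \<le> r" "r < s" for k r
    using killed_solutions_eq_if_alive_iff[OF sol sol', of r k r] killed_paths_kill_times[OF sol]
      killed_paths_kill_times[OF sol'] alive_iff w that j0 t\<^sub>0 by auto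
  have s: "0 \<le> s" "s \<le> T"
    using j0 t\<^sub>0 by auto
  have "?\<tau>' j0 = ?\<tau> j0" if "?\<tau> j0 = ereal s"
    using kill_time_causal[where z = "z j0", OF continuous_while_alive_positions[OF sol]
        continuous_while_alive_positions[OF sol'] j0(1) s agree] that
    by (simp add: kill_time_killed_paths_kill_times[OF sol j0(1)] kill_time_killed_paths_kill_times[OF sol' j0(1)])
  moreover have "?\<tau> j0 = ?\<tau>' j0" if "?\<tau>' j0 = ereal s"
    using kill_time_causal[where z = "z j0", OF continuous_while_alive_positions[OF sol']
        continuous_while_alive_positions[OF sol] j0(1) s agree[symmetric]] that
    by (simp add: kill_time_killed_paths_kill_times[OF sol j0(1)] kill_time_killed_paths_kill_times[OF sol' j0(1)])
  ultimately show False
    using j0(2,3) by (auto simp: min_def split: if_splits)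
qed

theorem killed_solution_unique:
  assumes sol: "is_killed_solution T N K dK lam c0 phi0 phi1 x\<^sub>0 w z \<xi>"
    and sol': "is_killed_solution T N K dK lam c0 phi0 phi1 x\<^sub>0 w' z \<xi>'"
    and t\<^sub>0: "0 \<le> t\<^sub>0" "t\<^sub>0 \<le> T" and w: "\<And>i s. i < N \<Longrightarrow> s \<in> {0..t\<^sub>0} \<Longrightarrow> w i s = w' i s"
    and "i < N" "t \<in> {0..t\<^sub>0}"
  shows "\<xi> i t = \<xi>' i t"
proof (rule killed_solutions_eq_if_alive_iff[OF sol sol' t\<^sub>0 w])
  fix j r assume "j < N" "r \<in> {0..t\<^sub>0}"
  then show "ereal r < kill_times z \<xi> j \<longleftrightarrow> ereal r < kill_times z \<xi>' j"
    using kill_times_agree[OF sol sol' t\<^sub>0 w \<open>j < N\<close>]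
    by (cases "min (kill_times z \<xi> j) (kill_times z \<xi>' j) \<le> ereal t\<^sub>0")
       (auto simp: not_le intro: le_less_trans[of _ "ereal t\<^sub>0"])
qed (use assms in auto)

lemma AE_killed_solutions_eq:
  assumes "AE \<omega> in M. is_killed_solution T N K dK lam c0 phi0 phi1 (x\<^sub>0 \<omega>) (w \<omega>) (z \<omega>) (\<xi> \<omega>)"
    and "AE \<omega> in M. is_killed_solution T N K dK lam c0 phi0 phi1 (x\<^sub>0 \<omega>) (w \<omega>) (z \<omega>) (\<xi>' \<omega>)"
  shows "AE \<omega> in M. \<forall>i<N. \<forall>t. 0 \<le> t \<and> t \<le> T \<longrightarrow> \<xi> \<omega> i t = \<xi>' \<omega> i t"
  using assms
proof eventually_elim
  case (elim \<omega>)
  then show ?case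
    using killed_solution_unique[OF elim, where t\<^sub>0 = T] T_pos by auto
qed

end

section \<open>Measurability of the construction\<close>

lemma floor_mult_div_LIMSEQ: "(\<lambda>n. real_of_int \<lfloor>real (Suc n) * t\<rfloor> / real (Suc n)) \<longlonglongrightarrow> t"
proof -
  have lower: "t - 1 / real (Suc n) \<le> real_of_int \<lfloor>real (Suc n) * t\<rfloor> / real (Suc n)" for n
  proof -
    have "t - 1 / real (Suc n) = (real (Suc n) * t - 1) / real (Suc n)"
      by (simp add: field_simps)
    also have "\<dots> \<le> real_of_int \<lfloor>real (Suc n) * t\<rfloor> / real (Suc n)"
      by (rule divide_right_mono) (linarith, simp)
    finally show ?thesis .
  qed
  have upper: "real_of_int \<lfloor>real (Suc n) * t\<rfloor> / real (Suc n) \<le> t" for n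
    using divide_right_mono[of "real_of_int \<lfloor>real (Suc n) * t\<rfloor>" "real (Suc n) * t" "real (Suc n)"] by simp
  have "(\<lambda>n. t - 1 / real (Suc n)) \<longlonglongrightarrow> t - 0"
    by (intro tendsto_intros LIMSEQ_inverse_real_of_nat[unfolded inverse_eq_divide])
  then have "(\<lambda>n. t - 1 / real (Suc n)) \<longlonglongrightarrow> t"
    by simp
  from real_tendsto_sandwich[OF always_eventually always_eventually this tendsto_const] show ?thesis
    using lower upper by auto
qed

lemma clamp_real_in_Icc: "0 \<le> T \<Longrightarrow> clamp 0 T (t::real) \<in> {0..T}"
  using clamp_in_interval[of 0 T t] by simp

lemma continuous_on_clamp_real:
  fixes f :: "real \<Rightarrow> 'a::metric_space"
  shows "continuous_on {0..T} f \<Longrightarrow> continuous_on S (\<lambda>t. f (clamp 0 T t))"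
  using clamp_continuous_on[of 0 T f S] by simp

text \<open>The clamped process is the pointwise limit of its samples on the grids \<open>\<int> / (n + 1)\<close>.\<close>

lemma borel_measurable_continuous_process:
  fixes X :: "real \<Rightarrow> 'a \<Rightarrow> real"
  assumes meas: "\<And>t. t \<in> {0..T} \<Longrightarrow> X t \<in> borel_measurable M"
    and cont: "\<And>\<omega>. \<omega> \<in> space M \<Longrightarrow> continuous_on {0..T} (\<lambda>t. X t \<omega>)" and "0 \<le> T"
  shows "(\<lambda>p. X (clamp 0 T (snd p)) (fst p)) \<in> borel_measurable (M \<Otimes>\<^sub>M lborel)"
proof (rule borel_measurable_LIMSEQ_real)
  define X' where "X' n p = X (clamp 0 T (real_of_int \<lfloor>real (Suc n) * snd p\<rfloor> / real (Suc n))) (fst p)" for n p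
  show "X' n \<in> borel_measurable (M \<Otimes>\<^sub>M lborel)" for n
  proof -
    let ?h = "\<lambda>(k::int, \<omega>). X (clamp 0 T (real_of_int k / real (Suc n))) \<omega>"
    have "?h \<in> borel_measurable (count_space UNIV \<Otimes>\<^sub>M M)"
      using clamp_real_in_Icc[OF \<open>0 \<le> T\<close>] by (intro measurable_pair_measure_countable1) (auto intro: meas)
    moreover have "(\<lambda>p. (\<lfloor>real (Suc n) * snd p\<rfloor>, fst p)) \<in> measurable (M \<Otimes>\<^sub>M lborel) (count_space UNIV \<Otimes>\<^sub>M M)"
      by measurable
    moreover have "X' n = ?h \<circ> (\<lambda>p. (\<lfloor>real (Suc n) * snd p\<rfloor>, fst p))"
      by (auto simp: X'_def fun_eq_iff)
    ultimately show ?thesis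
      by (simp add: measurable_comp)
  qed
  fix p :: "'a \<times> real" assume "p \<in> space (M \<Otimes>\<^sub>M lborel)"
  then have "continuous_on UNIV (\<lambda>t. X (clamp 0 T t) (fst p))"
    using cont by (intro continuous_on_clamp_real) (auto simp: space_pair_measure)
  then show "(\<lambda>n. X' n p) \<longlonglongrightarrow> X (clamp 0 T (snd p)) (fst p)"
    unfolding X'_def by (rule continuous_on_tendsto_compose[OF _ floor_mult_div_LIMSEQ]) auto
qed

lemma meas_opt_killed_paths:
  assumes "(\<lambda>\<omega>. \<sigma> \<omega> i) \<in> borel_measurable G" "(\<lambda>\<omega>. y \<omega> i t) \<in> borel_measurable G"
  shows "meas_opt G (\<lambda>\<omega>. killed_paths (\<sigma> \<omega>) (y \<omega>) i t)"
  unfolding meas_opt_def killed_paths_def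
proof (intro conjI ballI)
  have "{\<omega> \<in> space G. (if ereal t < \<sigma> \<omega> i then Some (y \<omega> i t) else None) = None} = {\<omega> \<in> space G. \<not> ereal t < \<sigma> \<omega> i}"
    by auto
  also have "\<dots> \<in> sets G"
    using assms by measurable
  finally show "{\<omega> \<in> space G. (if ereal t < \<sigma> \<omega> i then Some (y \<omega> i t) else None) = None} \<in> sets G" .
  fix B :: "real set" assume "B \<in> sets borel"
  have "{\<omega> \<in> space G. (if ereal t < \<sigma> \<omega> i then Some (y \<omega> i t) else None) \<in> Some ` B}
      = {\<omega> \<in> space G. ereal t < \<sigma> \<omega> i \<and> y \<omega> i t \<in> B}"
    by auto
  also have "\<dots> \<in> sets G"
    using assms \<open>B \<in> sets borel\<close> by measurable
  finally show "{\<omega> \<in> space G. (if ereal t < \<sigma> \<omega> i then Some (y \<omega> i t) else None) \<in> Some ` B} \<in> sets G" .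
qed

lemma meas_opt_cong:
  assumes "meas_opt G X" "\<And>\<omega>. \<omega> \<in> space G \<Longrightarrow> X \<omega> = Y \<omega>"
  shows "meas_opt G Y"
proof -
  have "{\<omega> \<in> space G. Y \<omega> = None} = {\<omega> \<in> space G. X \<omega> = None}"
    "\<And>B. {\<omega> \<in> space G. Y \<omega> \<in> Some ` B} = {\<omega> \<in> space G. X \<omega> \<in> Some ` B}"
    using assms(2) by auto
  then show ?thesis
    using assms(1) unfolding meas_opt_def by simp
qed

lemma gen_sigma_subset: "gen_sigma M Xs \<subseteq> Pow (space M)"
  unfolding gen_sigma_def by (auto dest: sigma_sets_into_sp[rotated])

lemma space_sigma_gen_sigma: "space (sigma (space M) (gen_sigma M Xs)) = space M"
  using gen_sigma_subset by (rule space_measure_of)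

lemma measurable_sigma_gen_sigma:
  assumes "X \<in> Xs"
  shows "X \<in> borel_measurable (sigma (space M) (gen_sigma M Xs))"
proof (rule measurableI)
  fix A :: "real set" assume "A \<in> sets borel"
  then have "X -` A \<inter> space M \<in> gen_sigma M Xs"
    using assms unfolding gen_sigma_def by (intro sigma_sets.Basic) blast
  then have "X -` A \<inter> space M \<in> sigma_sets (space M) (gen_sigma M Xs)"
    by (rule sigma_sets.Basic)
  then show "X -` A \<inter> space (sigma (space M) (gen_sigma M Xs)) \<in> sets (sigma (space M) (gen_sigma M Xs))"
    using gen_sigma_subset[of M Xs] by (simp add: sets_measure_of space_measure_of)
qed simp

context killed_system
begin

context
  fixes G :: "'a measure" and \<sigma> :: "'a \<Rightarrow> nat \<Rightarrow> ereal" and y :: "'a \<Rightarrow> nat \<Rightarrow> real \<Rightarrow> real"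
  assumes \<sigma>: "\<And>j. j < N \<Longrightarrow> (\<lambda>\<omega>. \<sigma> \<omega> j) \<in> borel_measurable G"
    and y_meas: "\<And>j t. j < N \<Longrightarrow> t \<in> {0..T} \<Longrightarrow> (\<lambda>\<omega>. y \<omega> j t) \<in> borel_measurable G"
    and y_cont: "\<And>j \<omega>. j < N \<Longrightarrow> \<omega> \<in> space G \<Longrightarrow> continuous_on {0..T} (y \<omega> j)"
begin

lemma borel_measurable_intuN:
  assumes "continuous_on UNIV \<kappa>" "s \<in> {0..T}" "X \<in> borel_measurable G"
  shows "(\<lambda>\<omega>. intuN N \<kappa> (killed_paths (\<sigma> \<omega>) (y \<omega>)) s (X \<omega>)) \<in> borel_measurable G"
proof -
  have [measurable]: "\<kappa> \<in> borel_measurable borel" "X \<in> borel_measurable G"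
    using assms by (auto intro: borel_measurable_continuous_onI)
  have [measurable]: "j < N \<Longrightarrow> (\<lambda>p. y (fst p) j (clamp 0 T (snd p))) \<in> borel_measurable (G \<Otimes>\<^sub>M lborel)"
    "j < N \<Longrightarrow> (\<lambda>\<omega>. \<sigma> \<omega> j) \<in> borel_measurable G" for j
    using y_meas y_cont T_pos \<sigma> by (auto intro!: borel_measurable_continuous_process[where X = "\<lambda>t \<omega>. y \<omega> j t"])
  define F where "F \<omega> r = indicator {0..s} r *\<^sub>R ((1 / real N) *
    (\<Sum>j<N. if ereal r < \<sigma> \<omega> j then \<kappa> (X \<omega> - y \<omega> j (clamp 0 T r)) else 0))" for \<omega> r
  have "(\<lambda>p. F (fst p) (snd p)) \<in> borel_measurable (G \<Otimes>\<^sub>M lborel)"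
    unfolding F_def by measurable
  then have "(\<lambda>\<omega>. \<integral>r. F \<omega> r \<partial>lborel) \<in> borel_measurable G"
    by (rule lborel.borel_measurable_lebesgue_integral[unfolded case_prod_beta'])
  moreover have clamp_id: "clamp 0 T r = r" if "0 \<le> r" "r \<le> s" for r
    using that assms by simp
  moreover have "intuN N \<kappa> (killed_paths (\<sigma> \<omega>) (y \<omega>)) s (X \<omega>) = (\<integral>r. F \<omega> r \<partial>lborel)" for \<omega>
  proof -
    have "indicator {0..s} r *\<^sub>R uN N \<kappa> (killed_paths (\<sigma> \<omega>) (y \<omega>)) r (X \<omega>) = F \<omega> r" for r
      by (cases "r \<in> {0..s}") (simp_all add: F_def uN_killed_paths clamp_id cong: if_cong)
    then show ?thesis
      unfolding intuN_def set_lebesgue_integral_def by simp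
  qed
  ultimately show ?thesis
    by simp
qed

lemma borel_measurable_drift_at:
  assumes "s \<in> {0..T}" "i < N"
  shows "(\<lambda>\<omega>. drift_at (\<sigma> \<omega>) (y \<omega>) i s) \<in> borel_measurable G"
proof -
  have [measurable]: "(\<lambda>\<omega>. intuN N K (killed_paths (\<sigma> \<omega>) (y \<omega>)) s (y \<omega> i s)) \<in> borel_measurable G"
    "(\<lambda>\<omega>. intuN N dK (killed_paths (\<sigma> \<omega>) (y \<omega>)) s (y \<omega> i s)) \<in> borel_measurable G"
    using assms y_meas by (auto intro!: borel_measurable_intuN K.continuous dK.continuous)
  show ?thesis
    unfolding drift_at_def gradUN_eq_intuN drift_b_def by measurable
qed

lemma borel_measurable_drift_integral:
  assumes "t \<in> {0..T}" "i < N"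
  shows "(\<lambda>\<omega>. drift_integral (\<sigma> \<omega>) (y \<omega>) i t) \<in> borel_measurable G"
proof -
  have "(\<lambda>p. drift_at (\<sigma> (fst p)) (y (fst p)) i (clamp 0 T (snd p))) \<in> borel_measurable (G \<Otimes>\<^sub>M lborel)"
    using assms T_pos y_cont
    by (intro borel_measurable_continuous_process[where X = "\<lambda>t \<omega>. drift_at (\<sigma> \<omega>) (y \<omega>) i t"]
        borel_measurable_drift_at continuous_on_drift_at[OF continuous_while_aliveI]) auto
  then have "(\<lambda>p. indicator {0..t} (snd p) *\<^sub>R drift_at (\<sigma> (fst p)) (y (fst p)) i (clamp 0 T (snd p)))
      \<in> borel_measurable (G \<Otimes>\<^sub>M lborel)"
    by measurable
  then have "(\<lambda>\<omega>. \<integral>s. indicator {0..t} s *\<^sub>R drift_at (\<sigma> \<omega>) (y \<omega>) i (clamp 0 T s) \<partial>lborel) \<in> borel_measurable G"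
    by (rule lborel.borel_measurable_lebesgue_integral[unfolded case_prod_beta'])
  moreover have "drift_integral (\<sigma> \<omega>) (y \<omega>) i t
      = (\<integral>s. indicator {0..t} s *\<^sub>R drift_at (\<sigma> \<omega>) (y \<omega>) i (clamp 0 T s) \<partial>lborel)" for \<omega>
    unfolding drift_integral_def set_lebesgue_integral_def
    using assms by (intro Bochner_Integration.integral_cong) (auto simp: indicator_def)
  ultimately show ?thesis
    by simp
qed

lemma borel_measurable_kill_clock:
  assumes "j < N" "c \<in> {0..T}"
  shows "(\<lambda>\<omega>. kill_clock (killed_paths (\<sigma> \<omega>) (y \<omega>)) j c) \<in> borel_measurable G"
proof -
  define V where "V \<omega> s = intuN N K (killed_paths (\<sigma> \<omega>) (y \<omega>)) s (y \<omega> j s)" for \<omega> s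
  have [measurable]: "(\<lambda>p. V (fst p) (clamp 0 T (snd p))) \<in> borel_measurable (G \<Otimes>\<^sub>M lborel)"
  proof (rule borel_measurable_continuous_process[where X = "\<lambda>t \<omega>. V \<omega> t"])
    show "(\<lambda>\<omega>. V \<omega> t) \<in> borel_measurable G" if "t \<in> {0..T}" for t
      unfolding V_def using that assms y_meas by (intro borel_measurable_intuN K.continuous) auto
    show "continuous_on {0..T} (\<lambda>t. V \<omega> t)" if "\<omega> \<in> space G" for \<omega>
    proof -
      have alive: "continuous_while_alive T N (\<sigma> \<omega>) (y \<omega>)"
        using that y_cont by (intro continuous_while_aliveI)
      show ?thesis
        unfolding V_def
        by (rule continuous_on_compose2[OF K.continuous_on_intuN[OF alive], of _ "\<lambda>s. (s, y \<omega> j s)", simplified])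
           (use that assms y_cont in \<open>auto intro!: continuous_intros\<close>)
    qed
  qed (use T_pos in simp)
  have [measurable]: "(\<lambda>\<omega>. \<sigma> \<omega> j) \<in> borel_measurable G"
    using \<sigma> assms by simp
  define F where "F \<omega> s = indicator {0..c} s *\<^sub>R
    (if ereal s < \<sigma> \<omega> j then lam * c0 * exp (- lam * V \<omega> (clamp 0 T s)) else lam * c0)" for \<omega> s
  have "(\<lambda>p. F (fst p) (snd p)) \<in> borel_measurable (G \<Otimes>\<^sub>M lborel)"
    unfolding F_def by measurable
  then have "(\<lambda>\<omega>. \<integral>s. F \<omega> s \<partial>lborel) \<in> borel_measurable G"
    by (rule lborel.borel_measurable_lebesgue_integral[unfolded case_prod_beta'])
  moreover have "kill_clock (killed_paths (\<sigma> \<omega>) (y \<omega>)) j c = (\<integral>s. F \<omega> s \<partial>lborel)" for \<omega>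
    unfolding kill_clock_def set_lebesgue_integral_def F_def kill_rate_killed_paths V_def
    using assms by (intro Bochner_Integration.integral_cong) (auto simp: indicator_def)
  ultimately show ?thesis
    by simp
qed

end


context
  fixes G :: "'a measure" and X\<^sub>0 Z :: "nat \<Rightarrow> 'a \<Rightarrow> real" and W :: "nat \<Rightarrow> real \<Rightarrow> 'a \<Rightarrow> real"
  assumes X\<^sub>0: "\<And>i. i < N \<Longrightarrow> X\<^sub>0 i \<in> borel_measurable G"
    and Z: "\<And>i. i < N \<Longrightarrow> Z i \<in> borel_measurable G"
    and W_meas: "\<And>i t. i < N \<Longrightarrow> t \<in> {0..T} \<Longrightarrow> W i t \<in> borel_measurable G"
    and W_cont: "\<And>i \<omega>. i < N \<Longrightarrow> \<omega> \<in> space G \<Longrightarrow> continuous_on {0..T} (\<lambda>t. W i t \<omega>)"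
begin

context
  fixes \<sigma> :: "'a \<Rightarrow> nat \<Rightarrow> ereal"
  assumes \<sigma>: "\<And>j. j < N \<Longrightarrow> (\<lambda>\<omega>. \<sigma> \<omega> j) \<in> borel_measurable G"
begin

lemma borel_measurable_picard_iter:
  "i < N \<Longrightarrow> t \<in> {0..T} \<Longrightarrow> (\<lambda>\<omega>. picard_iter (\<lambda>i. X\<^sub>0 i \<omega>) (\<lambda>i t. W i t \<omega>) (\<sigma> \<omega>) n i t) \<in> borel_measurable G"
proof (induction n arbitrary: i t)
  case (Suc n)
  have [measurable]: "X\<^sub>0 i \<in> borel_measurable G" "W i t \<in> borel_measurable G"
    "(\<lambda>\<omega>. drift_integral (\<sigma> \<omega>) (picard_iter (\<lambda>i. X\<^sub>0 i \<omega>) (\<lambda>i t. W i t \<omega>) (\<sigma> \<omega>) n) i t) \<in> borel_measurable G"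
    using Suc W_cont
    by (auto intro!: X\<^sub>0 W_meas borel_measurable_drift_integral \<sigma> continuous_on_picard_iter)
  show ?case
    unfolding picard_iter_Suc picard_step_def by measurable
qed (simp add: picard_iter_0)

lemma borel_measurable_paths_for_kills:
  "i < N \<Longrightarrow> t \<in> {0..T} \<Longrightarrow> (\<lambda>\<omega>. paths_for_kills (\<lambda>i. X\<^sub>0 i \<omega>) (\<lambda>i t. W i t \<omega>) (\<sigma> \<omega>) i t) \<in> borel_measurable G"
  using W_cont by (intro borel_measurable_LIMSEQ_real[OF picard_iter_LIMSEQ borel_measurable_picard_iter]) auto

lemma borel_measurable_next_kill:
  assumes "j < N"
  shows "(\<lambda>\<omega>. next_kill (\<lambda>i. X\<^sub>0 i \<omega>) (\<lambda>i t. W i t \<omega>) (\<lambda>i. Z i \<omega>) (\<sigma> \<omega>) j) \<in> borel_measurable G"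
proof (rule borel_measurableI_le)
  let ?y = "\<lambda>\<omega>. paths_for_kills (\<lambda>i. X\<^sub>0 i \<omega>) (\<lambda>i t. W i t \<omega>) (\<sigma> \<omega>)"
  let ?next = "\<lambda>\<omega>. next_kill (\<lambda>i. X\<^sub>0 i \<omega>) (\<lambda>i t. W i t \<omega>) (\<lambda>i. Z i \<omega>) (\<sigma> \<omega>) j"
  have cases: "?next \<omega> = \<infinity> \<or> (\<exists>c. 0 \<le> c \<and> c \<le> T \<and> ?next \<omega> = ereal c)" if "\<omega> \<in> space G" for \<omega>
    using that W_cont assms by (intro next_kill_cases) auto
  fix c :: ereal
  show "{\<omega> \<in> space G. ?next \<omega> \<le> c} \<in> sets G"
  proof (cases "c = \<infinity> \<or> c < 0")
    case True
    have "0 \<le> ?next \<omega>" if "\<omega> \<in> space G" for \<omega>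
      using cases[OF that] by auto
    then have "{\<omega> \<in> space G. ?next \<omega> \<le> c} = (if c = \<infinity> then space G else {})"
      using True by (auto simp: not_le intro: less_le_trans[of c 0])
    then show ?thesis
      by simp
  next
    case False
    then obtain r where r: "c = ereal r" "0 \<le> r"
      by (cases c) auto
    have [measurable]: "Z j \<in> borel_measurable G"
      "(\<lambda>\<omega>. kill_clock (killed_paths (\<sigma> \<omega>) (?y \<omega>)) j (min r T)) \<in> borel_measurable G"
      using assms r T_pos W_cont
      by (auto intro!: Z borel_measurable_kill_clock \<sigma> borel_measurable_paths_for_kills continuous_on_paths_for_kills)
    have "{\<omega> \<in> space G. ?next \<omega> \<le> c} = {\<omega> \<in> space G. Z j \<omega> \<le> kill_clock (killed_paths (\<sigma> \<omega>) (?y \<omega>)) j (min r T)}"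
      using next_kill_le_iff[OF _ assms r(2)] W_cont r(1) by auto
    also have "\<dots> \<in> sets G"
      by measurable
    finally show ?thesis .
  qed
qed

lemma borel_measurable_kill_step:
  assumes "j < N"
  shows "(\<lambda>\<omega>. kill_step (\<lambda>i. X\<^sub>0 i \<omega>) (\<lambda>i t. W i t \<omega>) (\<lambda>i. Z i \<omega>) (\<sigma> \<omega>) j) \<in> borel_measurable G"
proof -
  have [measurable]: "\<And>j. j < N \<Longrightarrow> (\<lambda>\<omega>. \<sigma> \<omega> j) \<in> borel_measurable G"
    "\<And>j. j < N \<Longrightarrow> (\<lambda>\<omega>. next_kill (\<lambda>i. X\<^sub>0 i \<omega>) (\<lambda>i t. W i t \<omega>) (\<lambda>i. Z i \<omega>) (\<sigma> \<omega>) j) \<in> borel_measurable G"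
    using \<sigma> borel_measurable_next_kill by blast+
  show ?thesis
    unfolding kill_step_def first_new_kill_def using assms by measurable
qed

end

lemma borel_measurable_kill_iter:
  "j < N \<Longrightarrow> (\<lambda>\<omega>. kill_iter (\<lambda>i. X\<^sub>0 i \<omega>) (\<lambda>i t. W i t \<omega>) (\<lambda>i. Z i \<omega>) n j) \<in> borel_measurable G"
proof (induction n arbitrary: j)
  case (Suc n)
  then show ?case
    unfolding kill_iter_Suc by (rule borel_measurable_kill_step)
qed (simp add: kill_iter_def)

lemma meas_opt_killed_solution:
  assumes "i < N" "t \<in> {0..T}"
  shows "meas_opt G (\<lambda>\<omega>. killed_solution (\<lambda>i. X\<^sub>0 i \<omega>) (\<lambda>i t. W i t \<omega>) (\<lambda>i. Z i \<omega>) i t)"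
  unfolding killed_solution_def using assms borel_measurable_kill_iter
  by (intro meas_opt_killed_paths borel_measurable_kill_iter borel_measurable_paths_for_kills)

end

text \<open>Adaptedness: by pathwise uniqueness, the solution at time \<open>t\<close> is unchanged when the driving
  paths are frozen after \<open>t\<close>, and the frozen paths are measurable with respect to the information
  available at time \<open>t\<close>.\<close>

theorem killed_solution_adapted:
  fixes G :: "'a measure" and X\<^sub>0 Z :: "nat \<Rightarrow> 'a \<Rightarrow> real" and W :: "nat \<Rightarrow> real \<Rightarrow> 'a \<Rightarrow> real"
  assumes X\<^sub>0: "\<And>i. i < N \<Longrightarrow> X\<^sub>0 i \<in> borel_measurable G"
    and Z: "\<And>i. i < N \<Longrightarrow> Z i \<in> borel_measurable G"
    and W_meas: "\<And>i s. i < N \<Longrightarrow> s \<in> {0..t} \<Longrightarrow> W i s \<in> borel_measurable G"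
    and W_cont: "\<And>i \<omega>. i < N \<Longrightarrow> \<omega> \<in> space G \<Longrightarrow> continuous_on {0..T} (\<lambda>s. W i s \<omega>)"
    and "i < N" "t \<in> {0..T}"
  shows "meas_opt G (\<lambda>\<omega>. killed_solution (\<lambda>i. X\<^sub>0 i \<omega>) (\<lambda>i s. W i s \<omega>) (\<lambda>i. Z i \<omega>) i t)"
proof (rule meas_opt_cong)
  define W' where "W' i s = W i (clamp 0 t s)" for i s
  have W'_cont: "continuous_on {0..T} (\<lambda>s. W' i s \<omega>)" if "i < N" "\<omega> \<in> space G" for i \<omega>
    unfolding W'_def using that \<open>t \<in> {0..T}\<close>
    by (intro continuous_on_clamp_real[where f = "\<lambda>s. W i s \<omega>"] continuous_on_subset[OF W_cont]) auto
  show "meas_opt G (\<lambda>\<omega>. killed_solution (\<lambda>i. X\<^sub>0 i \<omega>) (\<lambda>i s. W' i s \<omega>) (\<lambda>i. Z i \<omega>) i t)"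
    using assms clamp_real_in_Icc[of t] W'_cont
    by (intro meas_opt_killed_solution) (auto simp: W'_def)
  fix \<omega> assume "\<omega> \<in> space G"
  then have "\<And>i. i < N \<Longrightarrow> continuous_on {0..T} (\<lambda>s. W' i s \<omega>)" "\<And>i. i < N \<Longrightarrow> continuous_on {0..T} (\<lambda>s. W i s \<omega>)"
    using W'_cont W_cont by auto
  from this[THEN killed_solution_is_solution]
  show "killed_solution (\<lambda>i. X\<^sub>0 i \<omega>) (\<lambda>i s. W' i s \<omega>) (\<lambda>i. Z i \<omega>) i t
      = killed_solution (\<lambda>i. X\<^sub>0 i \<omega>) (\<lambda>i s. W i s \<omega>) (\<lambda>i. Z i \<omega>) i t"
    by (rule killed_solution_unique[where t\<^sub>0 = t]) (use assms(5,6) in \<open>auto simp: W'_def\<close>)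
qed

end

lemma brownian_motion_continuous_on:
  assumes "brownian_motion M F W" "\<omega> \<in> space M"
  shows "continuous_on {0..T} (\<lambda>t. W t \<omega>)"
proof -
  have "continuous_on {0..} (\<lambda>t. W t \<omega>)"
    using assms unfolding brownian_motion_def by blast
  then show ?thesis
    by (rule continuous_on_subset) auto
qed

theorem proposition4p1:
  fixes M :: "'a measure" and F :: "real \<Rightarrow> 'a measure"
    and T :: real and N :: nat
    and W :: "nat \<Rightarrow> real \<Rightarrow> 'a \<Rightarrow> real" and X0 :: "nat \<Rightarrow> 'a \<Rightarrow> real"
    and Z :: "nat \<Rightarrow> 'a \<Rightarrow> real" and rho0 :: "real \<Rightarrow> real"
    and K :: "real \<Rightarrow> real" and Kd :: "nat \<Rightarrow> real \<Rightarrow> real"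
    and MK MK' MK'' LK LK' :: real
    and lam c0 phi0 phi1 m Mb :: real
  assumes T_pos: "T > 0"
    and prob: "prob_space M"
    and filt: "filtration (space M) F" and F_sub: "\<And>t. sets (F t) \<subseteq> sets M"
    and BM: "\<And>i. i < N \<Longrightarrow> brownian_motion M F (W i)"
    and X0_meas: "\<And>i. i < N \<Longrightarrow> X0 i \<in> borel_measurable (F 0)"
    and X0_law: "\<And>i. i < N \<Longrightarrow> distributed M lborel (X0 i) (\<lambda>x. ennreal (rho0 x))"
    and rho0_nonneg: "\<And>x. rho0 x \<ge> 0"
    and rho0_L2: "integrable lborel (\<lambda>x. (rho0 x)\<^sup>2)"
    and rho0_cont: "continuous_on UNIV rho0" and rho0_bdd: "bounded (range rho0)"
    and rho0_mom2: "integrable lborel (\<lambda>x. x\<^sup>2 * rho0 x)"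
    and Z_law: "\<And>i. i < N \<Longrightarrow> distributed M lborel (Z i) (\<lambda>x. ennreal (exponential_density 1 x))"
    and indep: "prob_space.indep_sets M
        (case_sum (\<lambda>i. gen_sigma M {X0 i})
           (case_sum (\<lambda>i. gen_sigma M {Z i}) (\<lambda>i. gen_sigma M {W i s | s. 0 \<le> s})))
        (Inl ` {..<N} \<union> Inr ` Inl ` {..<N} \<union> Inr ` Inr ` {..<N})"
    and K_smooth0: "Kd 0 = K"
    and K_smooth: "\<And>n x. (Kd n has_real_derivative Kd (Suc n) x) (at x)"
    and K_nonneg: "\<And>x. K x \<ge> 0"
    and K_bdd: "\<And>x. \<bar>K x\<bar> \<le> MK" and dK_bdd: "\<And>x. \<bar>Kd 1 x\<bar> \<le> MK'"
    and d2K_bdd: "\<And>x. \<bar>Kd 2 x\<bar> \<le> MK''"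
    and K_lip: "\<And>x y. \<bar>K x - K y\<bar> \<le> LK * \<bar>x - y\<bar>"
    and dK_lip: "\<And>x y. \<bar>Kd 1 x - Kd 1 y\<bar> \<le> LK' * \<bar>x - y\<bar>"
    and K_int: "integrable lborel K" and K_mass: "integral\<^sup>L lborel K = 1"
    and lam_pos: "lam > 0" and c0_pos: "c0 > 0" and phi0_pos: "phi0 > 0"
    and m_pos: "0 < m" and m_le: "m \<le> Mb"
    and phi_bounds: "\<And>x. 0 \<le> x \<Longrightarrow> x \<le> MK * T \<Longrightarrow>
        m \<le> phi0 + phi1 * c0 * exp (- lam * x) \<and> phi0 + phi1 * c0 * exp (- lam * x) \<le> Mb"
  shows
    \<comment> \<open>existence of a strong solution, adapted to the filtration generated by the data\<close>
    "(\<exists>\<xi> :: nat \<Rightarrow> real \<Rightarrow> 'a \<Rightarrow> real option.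
        (AE \<omega> in M. is_killed_solution T N K (Kd 1) lam c0 phi0 phi1
              (\<lambda>i. X0 i \<omega>) (\<lambda>i t. W i t \<omega>) (\<lambda>i. Z i \<omega>) (\<lambda>i t. \<xi> i t \<omega>)) \<and>
        (\<forall>i<N. \<forall>t. 0 \<le> t \<and> t \<le> T \<longrightarrow>
           meas_opt (sigma (space M) (gen_sigma M
              ({X0 j | j. j < N} \<union> {Z j | j. j < N} \<union> {W j s | j s. j < N \<and> 0 \<le> s \<and> s \<le> t})))
             (\<xi> i t)))
     \<and>
     \<comment> \<open>pathwise uniqueness among F-adapted solutions\<close>
     (\<forall>\<xi> \<xi>' :: nat \<Rightarrow> real \<Rightarrow> 'a \<Rightarrow> real option.
        (AE \<omega> in M. is_killed_solution T N K (Kd 1) lam c0 phi0 phi1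
              (\<lambda>i. X0 i \<omega>) (\<lambda>i t. W i t \<omega>) (\<lambda>i. Z i \<omega>) (\<lambda>i t. \<xi> i t \<omega>)) \<and>
        (\<forall>i<N. \<forall>t. 0 \<le> t \<and> t \<le> T \<longrightarrow> meas_opt (F t) (\<xi> i t)) \<and>
        (AE \<omega> in M. is_killed_solution T N K (Kd 1) lam c0 phi0 phi1
              (\<lambda>i. X0 i \<omega>) (\<lambda>i t. W i t \<omega>) (\<lambda>i. Z i \<omega>) (\<lambda>i t. \<xi>' i t \<omega>)) \<and>
        (\<forall>i<N. \<forall>t. 0 \<le> t \<and> t \<le> T \<longrightarrow> meas_opt (F t) (\<xi>' i t))
        \<longrightarrow> (AE \<omega> in M. \<forall>i<N. \<forall>t. 0 \<le> t \<and> t \<le> T \<longrightarrow> \<xi> i t \<omega> = \<xi>' i t \<omega>))"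
proof -
  interpret killed_system K "Kd 1" MK LK MK' LK' T N lam c0 phi0 phi1 m
    by unfold_locales (use K_bdd dK_bdd K_lip dK_lip T_pos K_nonneg lam_pos c0_pos m_pos phi_bounds in auto)
  have paths: "\<And>i \<omega>. i < N \<Longrightarrow> \<omega> \<in> space M \<Longrightarrow> continuous_on {0..T} (\<lambda>t. W i t \<omega>)"
    by (rule brownian_motion_continuous_on[OF BM])
  define \<xi> where "\<xi> i t \<omega> = killed_solution (\<lambda>i. X0 i \<omega>) (\<lambda>i t. W i t \<omega>) (\<lambda>i. Z i \<omega>) i t" for i t \<omega>
  have "AE \<omega> in M. is_killed_solution T N K (Kd 1) lam c0 phi0 phi1
      (\<lambda>i. X0 i \<omega>) (\<lambda>i t. W i t \<omega>) (\<lambda>i. Z i \<omega>) (\<lambda>i t. \<xi> i t \<omega>)"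
    unfolding \<xi>_def by (rule AE_I2, rule killed_solution_is_solution, rule paths)
  moreover have "meas_opt (sigma (space M) (gen_sigma M
      ({X0 j | j. j < N} \<union> {Z j | j. j < N} \<union> {W j s | j s. j < N \<and> 0 \<le> s \<and> s \<le> t}))) (\<xi> i t)"
    if "i < N" "0 \<le> t" "t \<le> T" for i t
    unfolding \<xi>_def using that paths
    by (intro killed_solution_adapted measurable_sigma_gen_sigma) (auto simp: space_sigma_gen_sigma)
  moreover have "AE \<omega> in M. \<forall>i<N. \<forall>t. 0 \<le> t \<and> t \<le> T \<longrightarrow> \<xi>\<^sub>1 i t \<omega> = \<xi>\<^sub>2 i t \<omega>"
    if "AE \<omega> in M. is_killed_solution T N K (Kd 1) lam c0 phi0 phi1
          (\<lambda>i. X0 i \<omega>) (\<lambda>i t. W i t \<omega>) (\<lambda>i. Z i \<omega>) (\<lambda>i t. \<xi>\<^sub>1 i t \<omega>)"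
      and "AE \<omega> in M. is_killed_solution T N K (Kd 1) lam c0 phi0 phi1
          (\<lambda>i. X0 i \<omega>) (\<lambda>i t. W i t \<omega>) (\<lambda>i. Z i \<omega>) (\<lambda>i t. \<xi>\<^sub>2 i t \<omega>)"
    for \<xi>\<^sub>1 \<xi>\<^sub>2 :: "nat \<Rightarrow> real \<Rightarrow> 'a \<Rightarrow> real option"
    by (rule AE_killed_solutions_eq[OF that])
  ultimately show ?thesis
    by blast
qed

end
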